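(* Let $a>0$ and $T>0$. Then for every finite $\Lambda\subset\mathbb Z^2$, every $A\subset\Lambda$ and every $i\in\Lambda\setminus A$, $$\mu^0_{\Lambda\setminus A}(h_i>T+a)\le\mu^0_\Lambda\big(h_i>T\,\big|\,|h_j|\le a\ \forall j\in A\big)\le\mu^0_{\Lambda\setminus A}(h_i>T-a).$$
   Context: Fix an integer $r\ge1$. For each $k\in\mathbb Z^2$ let $\Psi_k:\mathbb R\to\mathbb R$ satisfy: $\Psi_k\equiv0$ if $\|k\|_1>r$; $\Psi_k=\Psi_{-k}$ and $\Psi_k(x)=\Psi_k(-x)$; $\Psi_k$ is $C^2$; $\Psi_k''\ge0$, and there is $c>0$ such that the translation-invariant random walk on $\mathbb Z^2$ with jump rates $P_c(0,j)=1$ if $\Psi_j''(h)\ge c$ for all $h$ and $0$ otherwise is irreducible. For finite $\Lambda\subset\mathbb Z^2$ and $b\in\mathbb R$, $$\mu^b_\Lambda(d\underline h)=\frac1{Z^b_\Lambda}\exp\Big\{-\sum_{\langle ij\rangle\cap\Lambda\neq\emptyset}\Psi_{j-i}(h_i-h_j)\Big\}\prod_{i\in\Lambda}dh_i\prod_{i\notin\Lambda}\delta_b(dh_i),$$ the sum being over pairs of distinct sites with $\|j-i\|_\infty\le r$ meeting $\Lambda$. *)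

theory Defs
  imports "HOL-Analysis.Analysis"
begin

type_synonym site = "int \<times> int"
type_synonym config = "site \<Rightarrow> real"

definition norm1 :: "site \<Rightarrow> int" where
  "norm1 k = \<bar>fst k\<bar> + \<bar>snd k\<bar>"

definition norminf :: "site \<Rightarrow> int" where
  "norminf k = max \<bar>fst k\<bar> \<bar>snd k\<bar>"

definition site_diff :: "site \<Rightarrow> site \<Rightarrow> site" where
  "site_diff j i = (fst j - fst i, snd j - snd i)"

definition site_add :: "site \<Rightarrow> site \<Rightarrow> site" where
  "site_add u v = (fst u + fst v, snd u + snd v)"

definition site_neg :: "site \<Rightarrow> site" where
  "site_neg k = (- fst k, - snd k)"

definition C2 :: "(real \<Rightarrow> real) \<Rightarrow> bool" where
  "C2 f \<longleftrightarrow> (\<exists>f' f''. (\<forall>x. (f has_real_derivative f' x) (at x)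
       \<and> (f' has_real_derivative f'' x) (at x)) \<and> continuous_on UNIV f'')"

text \<open>Jump set of the random walk P_c: P_c(0,j)=1 iff Psi_j'' >= c everywhere.\<close>
definition jumps :: "(site \<Rightarrow> real \<Rightarrow> real) \<Rightarrow> real \<Rightarrow> site set" where
  "jumps \<Psi> c = {j. \<forall>h. deriv (deriv (\<Psi> j)) h \<ge> c}"

definition irreducible_walk :: "site set \<Rightarrow> bool" where
  "irreducible_walk J \<longleftrightarrow>
     (\<forall>x y. (x, y) \<in> {(u, site_add u j) | u j. j \<in> J}\<^sup>*)"

definition admissible_potential :: "nat \<Rightarrow> (site \<Rightarrow> real \<Rightarrow> real) \<Rightarrow> bool" where
  "admissible_potential r \<Psi> \<longleftrightarrow>
     (\<forall>k. norm1 k > int r \<longrightarrow> (\<forall>x. \<Psi> k x = 0))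
   \<and> (\<forall>k. \<Psi> k = \<Psi> (site_neg k))
   \<and> (\<forall>k x. \<Psi> k x = \<Psi> k (- x))
   \<and> (\<forall>k. C2 (\<Psi> k))
   \<and> (\<forall>k x. deriv (deriv (\<Psi> k)) x \<ge> 0)
   \<and> (\<exists>c>0. irreducible_walk (jumps \<Psi> c))"

text \<open>Each unordered pair <ij> appears twice; by the symmetries of Psi both
  orientations give the same term, hence the factor 1/2 in the Hamiltonian.\<close>
definition pairs :: "nat \<Rightarrow> site set \<Rightarrow> (site \<times> site) set" where
  "pairs r \<Lambda> = {(i, j). i \<noteq> j \<and> norminf (site_diff j i) \<le> int r \<and> (i \<in> \<Lambda> \<or> j \<in> \<Lambda>)}"

definition hamiltonian :: "nat \<Rightarrow> (site \<Rightarrow> real \<Rightarrow> real) \<Rightarrow> site set \<Rightarrow> config \<Rightarrow> real" where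
  "hamiltonian r \<Psi> \<Lambda> h =
     (1/2) * (\<Sum>(i, j) \<in> pairs r \<Lambda>. \<Psi> (site_diff j i) (h i - h j))"

definition ext_bc :: "real \<Rightarrow> site set \<Rightarrow> config \<Rightarrow> config" where
  "ext_bc b \<Lambda> x = (\<lambda>i. if i \<in> \<Lambda> then x i else b)"

definition part_fun :: "nat \<Rightarrow> (site \<Rightarrow> real \<Rightarrow> real) \<Rightarrow> site set \<Rightarrow> real \<Rightarrow> ennreal" where
  "part_fun r \<Psi> \<Lambda> b =
     (\<integral>\<^sup>+ x. ennreal (exp (- hamiltonian r \<Psi> \<Lambda> (ext_bc b \<Lambda> x))) \<partial>(PiM \<Lambda> (\<lambda>_. lborel)))"

definition gibbs :: "nat \<Rightarrow> (site \<Rightarrow> real \<Rightarrow> real) \<Rightarrow> site set \<Rightarrow> real \<Rightarrow> config measure" where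
  "gibbs r \<Psi> \<Lambda> b =
     distr (density (PiM \<Lambda> (\<lambda>_. lborel))
              (\<lambda>x. ennreal (exp (- hamiltonian r \<Psi> \<Lambda> (ext_bc b \<Lambda> x))) / part_fun r \<Psi> \<Lambda> b))
           (PiM UNIV (\<lambda>_. borel)) (ext_bc b \<Lambda>)"

end

(*
  Every pair potential is convex, so the Hamiltonian is submodular for the pointwise order on
  configurations: H(x \<squnion> y) + H(x \<sqinter> y) \<le> H(x) + H(y). Compare mu^0_\<Lambda>( . | |h_A| \<le> a) with the
  measure on R^\<Lambda> that is mu^(-a) on \<Lambda> - A and uniform on the box [-a-1, -a]^A. On the
  supports, the heights on A of the second measure lie below -a, those of the first above it, so
  extending configurations by their boundary values commutes with max and min, and submodularity
  becomes the Holley condition. Holley's inequality, a consequence of the Ahlswede-Daykin four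
  functions theorem on R^\<Lambda> (by induction on the number of sites), orders the probabilities of
  the increasing event {h_i > T}; translation invariance of Lebesgue measure and of H identifies
  mu^(-a)(h_i > T) with mu^0(h_i > T + a). The upper bound is the mirror image, with the box
  [a, a+1]^A and boundary value a.

  The partition functions are finite: irreducibility of the walk along uniformly convex bonds gives
  a Poincare inequality, hence a Gaussian lower bound on H.
*)

theory Submission
  imports Defs "HOL-Probability.Probability"
begin

section \<open>Four functions and Holley inequalities on product measures\<close>

lemma add_le_add_of_mult_le_real:
  fixes a b c d :: real
  assumes "0 \<le> a" "0 \<le> b" "0 \<le> d" "a \<le> c" "b \<le> c" "a * b \<le> c * d"
  shows "a + b \<le> c + d"
proof (cases "c = 0")
  case True
  then show ?thesis using assms by auto
next
  case False
  then have "c > 0" using assms by auto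
  have "(c - a) * (c - b) \<ge> 0" using assms by auto
  then have "c * (a + b) \<le> c * c + a * b" by (simp add: algebra_simps)
  also have "\<dots> \<le> c * (c + d)" using assms by (simp add: algebra_simps)
  finally show ?thesis using \<open>c > 0\<close> by (simp add: mult_le_cancel_left)
qed

lemma add_le_add_of_mult_le_ennreal:
  fixes a b c d :: ennreal
  assumes "a \<le> c" "b \<le> c" "a * b \<le> c * d"
  shows "a + b \<le> c + d"
proof (cases "c = \<infinity> \<or> d = \<infinity>")
  case True
  then show ?thesis by (auto simp: top_add add_top)
next
  case False
  then obtain c' d' where c: "c = ennreal c'" "0 \<le> c'" and d: "d = ennreal d'" "0 \<le> d'"
    by (cases c; cases d) auto
  obtain a' where a: "a = ennreal a'" "0 \<le> a'"
    using assms(1) c by (cases a) (auto simp: top_unique)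
  obtain b' where b: "b = ennreal b'" "0 \<le> b'"
    using assms(2) c by (cases b) (auto simp: top_unique)
  have "a' \<le> c'" "b' \<le> c'" "a' * b' \<le> c' * d'"
    using assms a b c d by (auto simp: ennreal_mult[symmetric])
  then have "a' + b' \<le> c' + d'"
    using add_le_add_of_mult_le_real a b d by blast
  then show ?thesis using a b c d by (simp add: ennreal_plus[symmetric] del: ennreal_plus)
qed

lemma four_functions_real:
  fixes M :: "real measure" and \<alpha> \<beta> \<gamma> \<delta> :: "real \<Rightarrow> ennreal"
  assumes [measurable]: "\<alpha> \<in> borel_measurable M" "\<beta> \<in> borel_measurable M"
    "\<gamma> \<in> borel_measurable M" "\<delta> \<in> borel_measurable M"
  assumes four: "\<And>t s. t \<in> space M \<Longrightarrow> s \<in> space M \<Longrightarrow> \<alpha> t * \<beta> s \<le> \<gamma> (max t s) * \<delta> (min t s)"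
  shows "(\<integral>\<^sup>+t. \<alpha> t \<partial>M) * (\<integral>\<^sup>+t. \<beta> t \<partial>M) \<le> (\<integral>\<^sup>+t. \<gamma> t \<partial>M) * (\<integral>\<^sup>+t. \<delta> t \<partial>M)"
proof -
  have ordered: "\<alpha> t * \<beta> s + \<alpha> s * \<beta> t \<le> \<gamma> s * \<delta> t + \<gamma> t * \<delta> s"
    if "t \<in> space M" "s \<in> space M" "t \<le> s" for t s
  proof (rule add_le_add_of_mult_le_ennreal)
    show "\<alpha> t * \<beta> s \<le> \<gamma> s * \<delta> t" using four[of t s] that by (simp add: max_def min_def)
    show "\<alpha> s * \<beta> t \<le> \<gamma> s * \<delta> t" using four[of s t] that by (cases "s = t") (simp_all add: max_def min_def)
    have "\<alpha> t * \<beta> s * (\<alpha> s * \<beta> t) = (\<alpha> t * \<beta> t) * (\<alpha> s * \<beta> s)" by (simp add: ac_simps)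
    also have "\<dots> \<le> (\<gamma> t * \<delta> t) * (\<gamma> s * \<delta> s)"
      using four[of t t] four[of s s] that by (intro mult_mono[of "_ * _"]) simp_all
    also have "\<dots> = \<gamma> s * \<delta> t * (\<gamma> t * \<delta> s)" by (simp add: ac_simps)
    finally show "\<alpha> t * \<beta> s * (\<alpha> s * \<beta> t) \<le> \<gamma> s * \<delta> t * (\<gamma> t * \<delta> s)" .
  qed
  have symmetrized: "\<alpha> t * \<beta> s + \<alpha> s * \<beta> t \<le> \<gamma> t * \<delta> s + \<gamma> s * \<delta> t"
    if "t \<in> space M" "s \<in> space M" for t s
    using ordered[OF that] ordered[OF that(2,1)] by (cases "t \<le> s") (simp_all add: ac_simps)
  let ?A = "\<integral>\<^sup>+t. \<alpha> t \<partial>M" and ?B = "\<integral>\<^sup>+t. \<beta> t \<partial>M"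
  let ?C = "\<integral>\<^sup>+t. \<gamma> t \<partial>M" and ?D = "\<integral>\<^sup>+t. \<delta> t \<partial>M"
  have "?A * ?B + ?A * ?B = (\<integral>\<^sup>+t. (\<integral>\<^sup>+s. \<alpha> t * \<beta> s + \<alpha> s * \<beta> t \<partial>M) \<partial>M)"
    by (simp add: nn_integral_add nn_integral_cmult nn_integral_multc ac_simps)
  also have "\<dots> \<le> (\<integral>\<^sup>+t. (\<integral>\<^sup>+s. \<gamma> t * \<delta> s + \<gamma> s * \<delta> t \<partial>M) \<partial>M)"
    by (intro nn_integral_mono symmetrized) simp_all
  also have "\<dots> = ?C * ?D + ?C * ?D"
    by (simp add: nn_integral_add nn_integral_cmult nn_integral_multc ac_simps)
  finally show ?thesis unfolding mult_2[symmetric] by (simp add: ennreal_mult_le_mult_iff)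
qed

lemma sup_fun_upd: "sup (x(k := t)) (y(k := s)) = (sup x y)(k := max t s)" for x y :: "'a \<Rightarrow> real"
  by (auto simp: fun_eq_iff sup_max)

lemma inf_fun_upd: "inf (x(k := t)) (y(k := s)) = (inf x y)(k := min t s)" for x y :: "'a \<Rightarrow> real"
  by (auto simp: fun_eq_iff inf_min)

lemma sup_in_space_PiM:
  "x \<in> space (PiM I (\<lambda>_. M)) \<Longrightarrow> y \<in> space (PiM I (\<lambda>_. M)) \<Longrightarrow> sup x y \<in> space (PiM I (\<lambda>_. M :: real measure))"
  by (auto simp: space_PiM PiE_def extensional_def sup_max max_def)

lemma inf_in_space_PiM:
  "x \<in> space (PiM I (\<lambda>_. M)) \<Longrightarrow> y \<in> space (PiM I (\<lambda>_. M)) \<Longrightarrow> inf x y \<in> space (PiM I (\<lambda>_. M :: real measure))"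
  by (auto simp: space_PiM PiE_def extensional_def inf_min min_def)

lemma borel_measurable_nn_integral_fun_upd:
  assumes "sigma_finite_measure M" "k \<notin> I" "f \<in> borel_measurable (PiM (insert k I) (\<lambda>_. M))"
  shows "(\<lambda>x. \<integral>\<^sup>+t. f (x(k := t)) \<partial>M) \<in> borel_measurable (PiM I (\<lambda>_. M))"
proof -
  have "(\<lambda>p. (fst p)(k := snd p)) \<in> measurable (PiM I (\<lambda>_. M) \<Otimes>\<^sub>M M) (PiM (insert k I) (\<lambda>_. M))"
  proof (rule measurable_PiM_single')
    show "(\<lambda>p. ((fst p)(k := snd p)) j) \<in> measurable (PiM I (\<lambda>_. M) \<Otimes>\<^sub>M M) M" if "j \<in> insert k I" for j
      using that by (cases "j = k") auto
  qed (use assms(2) in \<open>auto simp: space_pair_measure space_PiM PiE_def extensional_def\<close>)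
  from measurable_comp[OF this assms(3)]
  have "(\<lambda>(x, t). f (x(k := t))) \<in> borel_measurable (PiM I (\<lambda>_. M) \<Otimes>\<^sub>M M)"
    by (simp add: comp_def case_prod_beta')
  then show ?thesis by (rule sigma_finite_measure.borel_measurable_nn_integral[OF assms(1)])
qed

lemma borel_measurable_fun_upd_line:
  assumes "f \<in> borel_measurable (PiM (insert k I) (\<lambda>_. M))" "x \<in> space (PiM I (\<lambda>_. M))" "k \<notin> I"
  shows "(\<lambda>t. f (x(k := t))) \<in> borel_measurable M"
  using measurable_comp[OF measurable_component_update[OF assms(2,3)] assms(1)] by (simp add: comp_def)

theorem four_functions_PiM:
  fixes M :: "real measure" and \<alpha> \<beta> \<gamma> \<delta> :: "('i \<Rightarrow> real) \<Rightarrow> ennreal"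
  assumes "sigma_finite_measure M" "finite I"
  assumes "\<alpha> \<in> borel_measurable (PiM I (\<lambda>_. M))" "\<beta> \<in> borel_measurable (PiM I (\<lambda>_. M))"
    "\<gamma> \<in> borel_measurable (PiM I (\<lambda>_. M))" "\<delta> \<in> borel_measurable (PiM I (\<lambda>_. M))"
  assumes "\<And>x y. x \<in> space (PiM I (\<lambda>_. M)) \<Longrightarrow> y \<in> space (PiM I (\<lambda>_. M))
      \<Longrightarrow> \<alpha> x * \<beta> y \<le> \<gamma> (sup x y) * \<delta> (inf x y)"
  shows "(\<integral>\<^sup>+x. \<alpha> x \<partial>PiM I (\<lambda>_. M)) * (\<integral>\<^sup>+x. \<beta> x \<partial>PiM I (\<lambda>_. M))
      \<le> (\<integral>\<^sup>+x. \<gamma> x \<partial>PiM I (\<lambda>_. M)) * (\<integral>\<^sup>+x. \<delta> x \<partial>PiM I (\<lambda>_. M))"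
  using assms(2-)
proof (induction I arbitrary: \<alpha> \<beta> \<gamma> \<delta> rule: finite_induct)
  case empty
  then show ?case by (simp add: PiM_empty nn_integral_count_space_finite)
next
  case (insert k I)
  interpret product_sigma_finite "\<lambda>_::'i. M"
    using assms(1) by (simp add: product_sigma_finite_def)
  let ?N = "PiM I (\<lambda>_. M)"
  define slice where "slice f x = (\<integral>\<^sup>+t. f (x(k := t)) \<partial>M)" for f :: "('i \<Rightarrow> real) \<Rightarrow> ennreal" and x
  have integral_slice: "(\<integral>\<^sup>+x. f x \<partial>PiM (insert k I) (\<lambda>_. M)) = (\<integral>\<^sup>+x. slice f x \<partial>?N)"
    and measurable_slice: "slice f \<in> borel_measurable ?N"
    if "f \<in> borel_measurable (PiM (insert k I) (\<lambda>_. M))" for f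
    unfolding slice_def[abs_def]
    using product_nn_integral_insert[OF insert(1,2) that]
      borel_measurable_nn_integral_fun_upd[OF assms(1) insert(2) that] by simp_all
  show ?case
    unfolding integral_slice[OF insert.prems(1)] integral_slice[OF insert.prems(2)]
      integral_slice[OF insert.prems(3)] integral_slice[OF insert.prems(4)]
  proof (rule insert.IH[OF measurable_slice measurable_slice measurable_slice measurable_slice])
    fix x y assume x: "x \<in> space ?N" and y: "y \<in> space ?N"
    show "slice \<alpha> x * slice \<beta> y \<le> slice \<gamma> (sup x y) * slice \<delta> (inf x y)"
      unfolding slice_def
    proof (rule four_functions_real)
      fix t s assume "t \<in> space M" "s \<in> space M"
      then have "x(k := t) \<in> space (PiM (insert k I) (\<lambda>_. M))" "y(k := s) \<in> space (PiM (insert k I) (\<lambda>_. M))"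
        using x y by (auto simp: space_PiM PiE_def extensional_def)
      from insert.prems(5)[OF this]
      show "\<alpha> (x(k := t)) * \<beta> (y(k := s)) \<le> \<gamma> ((sup x y)(k := max t s)) * \<delta> ((inf x y)(k := min t s))"
        unfolding sup_fun_upd inf_fun_upd .
    qed (fact borel_measurable_fun_upd_line[OF insert.prems(1) x insert(2)],
         fact borel_measurable_fun_upd_line[OF insert.prems(2) y insert(2)],
         fact borel_measurable_fun_upd_line[OF insert.prems(3) sup_in_space_PiM[OF x y] insert(2)],
         fact borel_measurable_fun_upd_line[OF insert.prems(4) inf_in_space_PiM[OF x y] insert(2)])
  qed (use insert.prems in auto)
qed

corollary holley_inequality:
  fixes M :: "real measure" and f g \<phi> :: "('i \<Rightarrow> real) \<Rightarrow> ennreal"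
  assumes "sigma_finite_measure M" "finite I"
  assumes [measurable]: "f \<in> borel_measurable (PiM I (\<lambda>_. M))" "g \<in> borel_measurable (PiM I (\<lambda>_. M))"
    "\<phi> \<in> borel_measurable (PiM I (\<lambda>_. M))"
  assumes holley: "\<And>x y. x \<in> space (PiM I (\<lambda>_. M)) \<Longrightarrow> y \<in> space (PiM I (\<lambda>_. M))
      \<Longrightarrow> f x * g y \<le> g (sup x y) * f (inf x y)"
    and mono: "\<And>x y. x \<in> space (PiM I (\<lambda>_. M)) \<Longrightarrow> y \<in> space (PiM I (\<lambda>_. M))
      \<Longrightarrow> \<phi> x \<le> \<phi> (sup x y)"
  shows "(\<integral>\<^sup>+x. f x * \<phi> x \<partial>PiM I (\<lambda>_. M)) * (\<integral>\<^sup>+x. g x \<partial>PiM I (\<lambda>_. M))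
      \<le> (\<integral>\<^sup>+x. g x * \<phi> x \<partial>PiM I (\<lambda>_. M)) * (\<integral>\<^sup>+x. f x \<partial>PiM I (\<lambda>_. M))"
proof (rule four_functions_PiM[OF assms(1,2)])
  fix x y assume "x \<in> space (PiM I (\<lambda>_. M))" "y \<in> space (PiM I (\<lambda>_. M))"
  then have "f x * g y * \<phi> x \<le> g (sup x y) * f (inf x y) * \<phi> (sup x y)"
    using holley mono by (intro mult_mono[of "_ * _"]) simp_all
  then show "f x * \<phi> x * g y \<le> g (sup x y) * \<phi> (sup x y) * f (inf x y)"
    by (simp add: ac_simps)
qed simp_all

section \<open>Lebesgue measure on \<open>\<real>\<^sup>I\<close>\<close>

interpretation lborel_product: product_sigma_finite "\<lambda>_::'i. lborel :: real measure"
  by standard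

lemma nn_integral_PiM_lborel_translate:
  fixes S :: "'i set" and b :: real
  assumes "finite S" "f \<in> borel_measurable (PiM S (\<lambda>_. lborel))"
  shows "(\<integral>\<^sup>+x. f (\<lambda>i\<in>S. x i + b) \<partial>PiM S (\<lambda>_. lborel)) = (\<integral>\<^sup>+x. f x \<partial>PiM S (\<lambda>_. lborel))"
  using assms
proof (induction S arbitrary: f rule: finite_induct)
  case empty
  show ?case by (simp add: PiM_empty nn_integral_count_space_finite)
next
  case (insert k S)
  let ?N = "PiM S (\<lambda>_. lborel :: real measure)"
  let ?shift = "\<lambda>x. \<lambda>i\<in>S. x i + b"
  have f: "f \<in> borel_measurable (PiM (insert k S) (\<lambda>_. lborel))" by fact
  define slice where "slice y = (\<integral>\<^sup>+t. f (y(k := t)) \<partial>lborel)" for y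
  have "(\<integral>\<^sup>+x. f (\<lambda>i\<in>insert k S. x i + b) \<partial>PiM (insert k S) (\<lambda>_. lborel))
      = (\<integral>\<^sup>+x. (\<integral>\<^sup>+t. f (\<lambda>i\<in>insert k S. (x(k := t)) i + b) \<partial>lborel) \<partial>?N)"
    by (rule lborel_product.product_nn_integral_insert[OF insert(1,2)])
      (rule measurable_compose[OF _ f], measurable)
  also have "\<dots> = (\<integral>\<^sup>+x. slice (?shift x) \<partial>?N)"
  proof (rule nn_integral_cong)
    fix x assume "x \<in> space ?N"
    have "?shift x \<in> space ?N" by (auto simp: space_PiM)
    from borel_measurable_fun_upd_line[OF f this insert(2)]
    have "(\<lambda>t. f ((?shift x)(k := t))) \<in> borel_measurable borel"
      unfolding measurable_lborel2 .
    from nn_integral_real_affine[OF this, of 1 b]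
    have "slice (?shift x) = (\<integral>\<^sup>+t. f ((?shift x)(k := b + t)) \<partial>lborel)"
      unfolding slice_def by simp
    moreover have "(\<lambda>i\<in>insert k S. (x(k := t)) i + b) = (?shift x)(k := b + t)" for t
      using insert(2) by (auto simp: fun_eq_iff)
    ultimately show "(\<integral>\<^sup>+t. f (\<lambda>i\<in>insert k S. (x(k := t)) i + b) \<partial>lborel) = slice (?shift x)"
      by simp
  qed
  also have "\<dots> = (\<integral>\<^sup>+x. slice x \<partial>?N)"
    unfolding slice_def[abs_def]
    by (rule insert.IH[OF borel_measurable_nn_integral_fun_upd[OF _ insert(2) f]]) standard
  also have "\<dots> = (\<integral>\<^sup>+x. f x \<partial>PiM (insert k S) (\<lambda>_. lborel))"
    unfolding slice_def by (rule lborel_product.product_nn_integral_insert[OF insert(1,2) f, symmetric])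
  finally show ?case .
qed

lemma nn_integral_PiM_disjoint_union:
  fixes S A :: "'i set"
  assumes "finite S" "finite A" "S \<inter> A = {}"
    and [measurable]: "F \<in> borel_measurable (PiM S (\<lambda>_. lborel))" "G \<in> borel_measurable (PiM A (\<lambda>_. lborel))"
  shows "(\<integral>\<^sup>+x. F (restrict x S) * G (restrict x A) \<partial>PiM (S \<union> A) (\<lambda>_. lborel))
       = (\<integral>\<^sup>+x. F x \<partial>PiM S (\<lambda>_. lborel)) * (\<integral>\<^sup>+x. G x \<partial>PiM A (\<lambda>_. lborel :: real measure))"
proof -
  have "(\<lambda>x. F (restrict x S) * G (restrict x A)) \<in> borel_measurable (PiM (S \<union> A) (\<lambda>_. lborel))"
    using measurable_restrict_subset[of S "S \<union> A"] measurable_restrict_subset[of A "S \<union> A"]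
    by measurable
  then have "(\<integral>\<^sup>+x. F (restrict x S) * G (restrict x A) \<partial>PiM (S \<union> A) (\<lambda>_. lborel))
    = (\<integral>\<^sup>+x. (\<integral>\<^sup>+y. F (restrict (merge S A (x, y)) S) * G (restrict (merge S A (x, y)) A)
        \<partial>PiM A (\<lambda>_. lborel)) \<partial>PiM S (\<lambda>_. lborel))"
    by (rule lborel_product.product_nn_integral_fold[OF assms(3,1,2)])
  also have "\<dots> = (\<integral>\<^sup>+x. F x * (\<integral>\<^sup>+y. G y \<partial>PiM A (\<lambda>_. lborel)) \<partial>PiM S (\<lambda>_. lborel))"
  proof (rule nn_integral_cong)
    fix x assume x: "x \<in> space (PiM S (\<lambda>_. lborel :: real measure))"
    have "(\<integral>\<^sup>+y. F (restrict (merge S A (x, y)) S) * G (restrict (merge S A (x, y)) A) \<partial>PiM A (\<lambda>_. lborel))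
        = (\<integral>\<^sup>+y. F x * G y \<partial>PiM A (\<lambda>_. lborel))"
    proof (rule nn_integral_cong)
      fix y assume "y \<in> space (PiM A (\<lambda>_. lborel :: real measure))"
      then show "F (restrict (merge S A (x, y)) S) * G (restrict (merge S A (x, y)) A) = F x * G y"
        using x assms(3) by (simp add: space_PiM PiE_def extensional_restrict)
    qed
    then show "(\<integral>\<^sup>+y. F (restrict (merge S A (x, y)) S) * G (restrict (merge S A (x, y)) A) \<partial>PiM A (\<lambda>_. lborel))
        = F x * (\<integral>\<^sup>+y. G y \<partial>PiM A (\<lambda>_. lborel))"
      by (simp add: nn_integral_cmult)
  qed
  also have "\<dots> = (\<integral>\<^sup>+x. F x \<partial>PiM S (\<lambda>_. lborel)) * (\<integral>\<^sup>+x. G x \<partial>PiM A (\<lambda>_. lborel))"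
    by (rule nn_integral_multc) simp
  finally show ?thesis .
qed

definition box_indicator :: "'i set \<Rightarrow> real \<Rightarrow> real \<Rightarrow> ('i \<Rightarrow> real) \<Rightarrow> ennreal" where
  "box_indicator A l u x = (\<Prod>j\<in>A. indicator {l..u} (x j))"

lemma box_indicator_eq:
  assumes "finite A"
  shows "box_indicator A l u x = (if \<forall>j\<in>A. l \<le> x j \<and> x j \<le> u then 1 else 0)"
  unfolding box_indicator_def using assms by (induction A rule: finite_induct) (auto simp: indicator_def)

lemma box_indicator_le_1: "box_indicator A l u x \<le> 1"
  unfolding box_indicator_def by (rule prod_le_1) (auto simp: indicator_def)

lemma borel_measurable_box_indicator [measurable]:
  assumes "A \<subseteq> I"
  shows "box_indicator A l u \<in> borel_measurable (PiM I (\<lambda>_. lborel))"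
  unfolding box_indicator_def[abs_def]
proof (rule borel_measurable_prod_ennreal)
  fix j assume "j \<in> A"
  with assms have "j \<in> I" by auto
  then show "(\<lambda>x. indicator {l..u} (x j) :: ennreal) \<in> borel_measurable (PiM I (\<lambda>_. lborel))"
    by measurable
qed

lemma nn_integral_box_indicator:
  assumes "finite A" "l \<le> u"
  shows "(\<integral>\<^sup>+x. box_indicator A l u x \<partial>PiM A (\<lambda>_. lborel)) = ennreal (u - l) ^ card A"
  unfolding box_indicator_def
  by (subst lborel_product.product_nn_integral_prod[OF assms(1)]) (simp_all add: assms(2))

lemma nn_integral_mult_box_indicator:
  assumes "finite S" "finite A" "S \<inter> A = {}" "l \<le> u"
    and "F \<in> borel_measurable (PiM S (\<lambda>_. lborel))" "\<And>x. F (restrict x S) = F x"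
  shows "(\<integral>\<^sup>+x. F x * box_indicator A l u x \<partial>PiM (S \<union> A) (\<lambda>_. lborel))
       = (\<integral>\<^sup>+x. F x \<partial>PiM S (\<lambda>_. lborel)) * ennreal (u - l) ^ card A"
proof -
  have "box_indicator A l u (restrict x A) = box_indicator A l u x" for x
    unfolding box_indicator_def by (rule prod.cong) auto
  then have "(\<integral>\<^sup>+x. F x * box_indicator A l u x \<partial>PiM (S \<union> A) (\<lambda>_. lborel))
      = (\<integral>\<^sup>+x. F (restrict x S) * box_indicator A l u (restrict x A) \<partial>PiM (S \<union> A) (\<lambda>_. lborel))"
    by (simp add: assms(6))
  also have "\<dots> = (\<integral>\<^sup>+x. F x \<partial>PiM S (\<lambda>_. lborel)) * (\<integral>\<^sup>+x. box_indicator A l u x \<partial>PiM A (\<lambda>_. lborel))"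
    by (rule nn_integral_PiM_disjoint_union[OF assms(1-3,5)]) simp
  finally show ?thesis by (simp add: nn_integral_box_indicator[OF assms(2,4)])
qed

lemma nn_integral_box_indicator_pos:
  assumes "finite L" "A \<subseteq> L" "l < u"
    and f: "f \<in> borel_measurable (PiM L (\<lambda>_. lborel))" "\<And>x. 0 < f x"
  shows "0 < (\<integral>\<^sup>+x. f x * box_indicator A l u x \<partial>PiM L (\<lambda>_. lborel))"
proof (rule ccontr)
  let ?M = "PiM L (\<lambda>_. lborel :: real measure)"
  define B where "B = PiE L (\<lambda>j. if j \<in> A then {l..u} else (UNIV :: real set))"
  have B: "B \<in> sets ?M" unfolding B_def by (rule sets_PiM_I_finite[OF assms(1)]) auto
  have "emeasure ?M B = (\<Prod>j\<in>L. emeasure lborel (if j \<in> A then {l..u} else (UNIV :: real set)))"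
    unfolding B_def by (rule lborel_product.emeasure_PiM[OF assms(1)]) auto
  also have "\<dots> \<noteq> 0" using assms(1,3) by (auto simp: ennreal_prod_eq_0 split: if_splits)
  finally have "emeasure ?M B \<noteq> 0" .
  have outside_B: "x \<notin> B" if "x \<in> space ?M" "f x * box_indicator A l u x = 0" for x
  proof
    assume "x \<in> B"
    then have "\<forall>j\<in>A. l \<le> x j \<and> x j \<le> u" using assms(2) unfolding B_def by (force simp: PiE_iff)
    then have "box_indicator A l u x = 1" using finite_subset[OF assms(2,1)] by (simp add: box_indicator_eq)
    then show False using that(2) f(2)[of x] by simp
  qed
  assume "\<not> ?thesis"
  then have "AE x in ?M. f x * box_indicator A l u x = 0"
    using f(1) assms(2) by (simp add: nn_integral_0_iff_AE zero_less_iff_neq_zero)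
  moreover have "AE x in ?M. x \<in> space ?M" by (rule AE_space)
  ultimately have "AE x in ?M. x \<notin> B"
    by eventually_elim (rule outside_B)
  then have "emeasure ?M B = 0"
    using AE_iff_measurable[OF B, of "\<lambda>x. x \<notin> B"] sets.sets_into_space[OF B] by auto
  then show False using \<open>emeasure ?M B \<noteq> 0\<close> by simp
qed

section \<open>Convex pair potentials\<close>

lemma C2_obtain_derivatives:
  assumes "C2 f"
  obtains f' f'' where "\<And>x. (f has_real_derivative f' x) (at x)"
    "\<And>x. (f' has_real_derivative f'' x) (at x)" "\<And>x. deriv (deriv f) x = f'' x"
proof -
  from assms obtain f' f'' where d: "\<And>x. (f has_real_derivative f' x) (at x)"
    "\<And>x. (f' has_real_derivative f'' x) (at x)"
    unfolding C2_def by blast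
  have "deriv f = f'" using d(1) by (auto simp: fun_eq_iff intro: DERIV_imp_deriv)
  then have "deriv (deriv f) x = f'' x" for x using d(2) by (auto intro: DERIV_imp_deriv)
  with d that show ?thesis by blast
qed

lemma convex_on_sub_quadratic:
  assumes "C2 f" "\<And>x. c \<le> deriv (deriv f) x"
  shows "convex_on UNIV (\<lambda>x. f x - c / 2 * x\<^sup>2)"
proof -
  obtain f' f'' where d: "\<And>x. (f has_real_derivative f' x) (at x)"
    "\<And>x. (f' has_real_derivative f'' x) (at x)" "\<And>x. deriv (deriv f) x = f'' x"
    using C2_obtain_derivatives[OF assms(1)] by blast
  have "((\<lambda>x. f x - c / 2 * x\<^sup>2) has_real_derivative (f' x - c * x)) (at x)" for x
    by (auto intro!: derivative_eq_intros d(1))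
  moreover have "((\<lambda>x. f' x - c * x) has_real_derivative (f'' x - c)) (at x)" for x
    by (auto intro!: derivative_eq_intros d(2))
  moreover have "f'' x - c \<ge> 0" for x using assms(2)[of x] d(3)[of x] by simp
  ultimately show ?thesis by (rule f''_ge0_imp_convex[OF convex_UNIV])
qed

lemma convex_on_even_ge_at_0:
  fixes g :: "real \<Rightarrow> real"
  assumes "convex_on UNIV g" "\<And>x. g (- x) = g x"
  shows "g 0 \<le> g x"
proof -
  have "g ((1 - 1/2) *\<^sub>R x + (1/2) *\<^sub>R (- x)) \<le> (1 - 1/2) * g x + (1/2) * g (- x)"
    by (rule convex_onD[OF assms(1)]) auto
  then show ?thesis using assms(2)[of x] by simp
qed

lemma admissible_potential_even:
  assumes "admissible_potential r \<Psi>"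
  shows "\<Psi> k (- x) = \<Psi> k x"
  using assms unfolding admissible_potential_def by metis

lemma admissible_potential_ge_quadratic:
  assumes "admissible_potential r \<Psi>" "k \<in> jumps \<Psi> c"
  shows "\<Psi> k 0 + c / 2 * x\<^sup>2 \<le> \<Psi> k x"
proof -
  have "C2 (\<Psi> k)" using assms(1) unfolding admissible_potential_def by blast
  moreover have "\<And>x. c \<le> deriv (deriv (\<Psi> k)) x" using assms(2) unfolding jumps_def by blast
  ultimately have "convex_on UNIV (\<lambda>x. \<Psi> k x - c / 2 * x\<^sup>2)"
    by (rule convex_on_sub_quadratic)
  then have "\<Psi> k 0 - c / 2 * 0\<^sup>2 \<le> \<Psi> k x - c / 2 * x\<^sup>2"
    by (rule convex_on_even_ge_at_0[where g = "\<lambda>x. \<Psi> k x - c / 2 * x\<^sup>2"])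
      (simp add: admissible_potential_even[OF assms(1)])
  then show ?thesis by simp
qed

lemma admissible_potential_in_jumps_0:
  assumes "admissible_potential r \<Psi>"
  shows "k \<in> jumps \<Psi> 0"
  using assms unfolding admissible_potential_def jumps_def by blast

lemma admissible_potential_convex:
  assumes "admissible_potential r \<Psi>"
  shows "convex_on UNIV (\<Psi> k)"
  using convex_on_sub_quadratic[of "\<Psi> k" 0] assms
  unfolding admissible_potential_def by simp

lemma admissible_potential_continuous:
  assumes "admissible_potential r \<Psi>"
  shows "continuous_on UNIV (\<Psi> k)"
proof -
  have "C2 (\<Psi> k)" using assms unfolding admissible_potential_def by blast
  then obtain f' where "\<And>x. (\<Psi> k has_real_derivative f' x) (at x)"
    unfolding C2_def by blast
  then show ?thesis by (meson DERIV_continuous continuous_at_imp_continuous_on)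
qed

lemma jumps_norminf_le:
  assumes "admissible_potential r \<Psi>" "c > 0" "j \<in> jumps \<Psi> c"
  shows "norminf j \<le> int r"
proof (rule ccontr)
  assume "\<not> norminf j \<le> int r"
  then have "norm1 j > int r" unfolding norminf_def norm1_def by linarith
  then have "\<Psi> j = (\<lambda>_. 0)" using assms(1) unfolding admissible_potential_def by blast
  then have "deriv (deriv (\<Psi> j)) 0 = 0" by simp
  moreover have "c \<le> deriv (deriv (\<Psi> j)) 0" using assms(3) unfolding jumps_def by blast
  ultimately show False using assms(2) by simp
qed

lemma convex_on_add_le_add:
  fixes \<phi> :: "real \<Rightarrow> real"
  assumes "convex_on UNIV \<phi>" "a \<le> c" "c \<le> b" "c + d = a + b"
  shows "\<phi> c + \<phi> d \<le> \<phi> a + \<phi> b"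
proof (cases "a = b")
  case True
  then show ?thesis using assms by simp
next
  case False
  then have "a < b" using assms by simp
  define l where "l = (b - c) / (b - a)"
  have l: "0 \<le> l" "l \<le> 1" using assms \<open>a < b\<close> unfolding l_def by (auto simp: field_simps)
  have "l * (b - a) = b - c" using \<open>a < b\<close> unfolding l_def by simp
  then have c: "c = (1 - (1 - l)) *\<^sub>R a + (1 - l) *\<^sub>R b" and d: "d = (1 - l) *\<^sub>R a + l *\<^sub>R b"
    using assms(4) by (simp_all add: algebra_simps)
  have "\<phi> c \<le> (1 - (1 - l)) * \<phi> a + (1 - l) * \<phi> b"
    unfolding c by (rule convex_onD[OF assms(1)]) (use l in auto)
  moreover have "\<phi> d \<le> (1 - l) * \<phi> a + l * \<phi> b"
    unfolding d by (rule convex_onD[OF assms(1)]) (use l in auto)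
  ultimately show ?thesis by (simp add: algebra_simps)
qed

lemma convex_on_max_min_diff_le:
  fixes \<phi> :: "real \<Rightarrow> real"
  assumes "convex_on UNIV \<phi>"
  shows "\<phi> (max x1 y1 - max x2 y2) + \<phi> (min x1 y1 - min x2 y2) \<le> \<phi> (x1 - x2) + \<phi> (y1 - y2)"
proof -
  consider "x1 \<le> y1" "x2 \<le> y2" | "y1 \<le> x1" "y2 \<le> x2" | "x1 \<le> y1" "y2 < x2" | "y1 \<le> x1" "x2 < y2"
    by linarith
  then show ?thesis
  proof cases
    case 3
    have "\<phi> (x1 - y2) + \<phi> (y1 - x2) \<le> \<phi> (x1 - x2) + \<phi> (y1 - y2)"
      by (rule convex_on_add_le_add[OF assms]) (use 3 in auto)
    then show ?thesis using 3 by (simp add: max_def min_def add.commute)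
  next
    case 4
    have "\<phi> (y1 - x2) + \<phi> (x1 - y2) \<le> \<phi> (y1 - y2) + \<phi> (x1 - x2)"
      by (rule convex_on_add_le_add[OF assms]) (use 4 in auto)
    then show ?thesis using 4 by (simp add: max_def min_def add.commute)
  qed (auto simp: max_def min_def add.commute)
qed

lemma finite_pairs:
  assumes "finite \<Lambda>"
  shows "finite (pairs r \<Lambda>)"
proof -
  define D where "D = {-int r..int r} \<times> {-int r..int r}"
  have "pairs r \<Lambda> \<subseteq> (\<lambda>(u, d). (u, site_add u d)) ` (\<Lambda> \<times> D) \<union> (\<lambda>(u, d). (site_add u d, u)) ` (\<Lambda> \<times> D)"
  proof
    fix p assume p: "p \<in> pairs r \<Lambda>"
    obtain i j where ij: "p = (i, j)" by (cases p)
    have "site_diff j i \<in> D" "site_diff i j \<in> D" "i \<in> \<Lambda> \<or> j \<in> \<Lambda>"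
      using p unfolding ij pairs_def D_def norminf_def site_diff_def by auto
    moreover have "j = site_add i (site_diff j i)" "i = site_add j (site_diff i j)"
      unfolding site_add_def site_diff_def by auto
    ultimately show "p \<in> (\<lambda>(u, d). (u, site_add u d)) ` (\<Lambda> \<times> D) \<union> (\<lambda>(u, d). (site_add u d, u)) ` (\<Lambda> \<times> D)"
      unfolding ij by (elim disjE) (force intro: image_eqI[where x = "(i, site_diff j i)"],
                                    force intro: image_eqI[where x = "(j, site_diff i j)"])
  qed
  then show ?thesis by (rule finite_subset) (auto simp: D_def assms)
qed

lemma pairs_mono: "S \<subseteq> \<Lambda> \<Longrightarrow> pairs r S \<subseteq> pairs r \<Lambda>"
  unfolding pairs_def by auto

lemma pairs_diff_outside: "(u, v) \<in> pairs r \<Lambda> - pairs r S \<Longrightarrow> u \<notin> S \<and> v \<notin> S"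
  unfolding pairs_def by auto

definition pair_energy :: "(site \<Rightarrow> real \<Rightarrow> real) \<Rightarrow> (site \<times> site) set \<Rightarrow> config \<Rightarrow> real" where
  "pair_energy \<Psi> P h = (1/2) * (\<Sum>(i, j)\<in>P. \<Psi> (site_diff j i) (h i - h j))"

lemma hamiltonian_eq_pair_energy: "hamiltonian r \<Psi> \<Lambda> = pair_energy \<Psi> (pairs r \<Lambda>)"
  unfolding hamiltonian_def[abs_def] pair_energy_def[abs_def] ..

lemma pair_energy_submodular:
  assumes "\<And>k. convex_on UNIV (\<Psi> k)"
  shows "pair_energy \<Psi> P (sup X Y) + pair_energy \<Psi> P (inf X Y) \<le> pair_energy \<Psi> P X + pair_energy \<Psi> P Y"
proof -
  have "(\<Sum>(i, j)\<in>P. \<Psi> (site_diff j i) (sup X Y i - sup X Y j) + \<Psi> (site_diff j i) (inf X Y i - inf X Y j))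
      \<le> (\<Sum>(i, j)\<in>P. \<Psi> (site_diff j i) (X i - X j) + \<Psi> (site_diff j i) (Y i - Y j))"
  proof (intro sum_mono, clarify)
    fix i j
    show "\<Psi> (site_diff j i) (sup X Y i - sup X Y j) + \<Psi> (site_diff j i) (inf X Y i - inf X Y j)
        \<le> \<Psi> (site_diff j i) (X i - X j) + \<Psi> (site_diff j i) (Y i - Y j)"
      using convex_on_max_min_diff_le[OF assms, of "site_diff j i" "X i" "Y i" "X j" "Y j"]
      by (simp add: sup_max inf_min)
  qed
  then show ?thesis unfolding pair_energy_def case_prod_beta' sum.distrib by simp
qed

lemma pair_energy_split:
  assumes "finite P" "Q \<subseteq> P"
  shows "pair_energy \<Psi> P h = pair_energy \<Psi> Q h + pair_energy \<Psi> (P - Q) h"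
  unfolding pair_energy_def using sum.subset_diff[OF assms(2,1)] by (simp add: algebra_simps)

lemma pair_energy_cong:
  assumes "\<And>u v. (u, v) \<in> P \<Longrightarrow> h u = h' u \<and> h v = h' v"
  shows "pair_energy \<Psi> P h = pair_energy \<Psi> P h'"
  unfolding pair_energy_def using assms by (auto intro!: sum.cong)

lemma pair_energy_sup_inf_le:
  assumes "\<And>k. convex_on UNIV (\<Psi> k)" "finite P" "Q \<subseteq> P"
    and le: "\<And>u v. (u, v) \<in> P - Q \<Longrightarrow> X u \<le> Y u \<and> X v \<le> Y v"
  shows "pair_energy \<Psi> P (sup X Y) + pair_energy \<Psi> Q (inf X Y) \<le> pair_energy \<Psi> Q X + pair_energy \<Psi> P Y"
proof -
  have "pair_energy \<Psi> (P - Q) (sup X Y) = pair_energy \<Psi> (P - Q) Y"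
    using le by (intro pair_energy_cong) (simp add: sup_max max_def)
  then show ?thesis
    using pair_energy_split[OF assms(2,3), of \<Psi> "sup X Y"] pair_energy_split[OF assms(2,3), of \<Psi> Y]
      pair_energy_submodular[of \<Psi> Q X Y, OF assms(1)]
    by linarith
qed

lemma pair_energy_sup_inf_le':
  assumes "\<And>k. convex_on UNIV (\<Psi> k)" "finite P" "Q \<subseteq> P"
    and le: "\<And>u v. (u, v) \<in> P - Q \<Longrightarrow> X u \<le> Y u \<and> X v \<le> Y v"
  shows "pair_energy \<Psi> Q (sup X Y) + pair_energy \<Psi> P (inf X Y) \<le> pair_energy \<Psi> P X + pair_energy \<Psi> Q Y"
proof -
  have "pair_energy \<Psi> (P - Q) (inf X Y) = pair_energy \<Psi> (P - Q) X"
    using le by (intro pair_energy_cong) (simp add: inf_min min_def)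
  then show ?thesis
    using pair_energy_split[OF assms(2,3), of \<Psi> "inf X Y"] pair_energy_split[OF assms(2,3), of \<Psi> X]
      pair_energy_submodular[of \<Psi> Q X Y, OF assms(1)]
    by linarith
qed

section \<open>Coercivity of the Hamiltonian\<close>

definition dirichlet_form :: "nat \<Rightarrow> site set \<Rightarrow> site set \<Rightarrow> config \<Rightarrow> real" where
  "dirichlet_form r J L h = (\<Sum>(u, v)\<in>pairs r L. if site_diff v u \<in> J then (h u - h v)\<^sup>2 else 0)"

lemma dirichlet_form_nonneg: "0 \<le> dirichlet_form r J L h"
  unfolding dirichlet_form_def by (intro sum_nonneg) auto

lemma sq_diff_le_dirichlet_form:
  assumes "finite L" "\<And>w. w \<notin> L \<Longrightarrow> h w = 0" "j \<in> J" "norminf j \<le> int r"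
  shows "(h u - h (site_add u j))\<^sup>2 \<le> dirichlet_form r J L h"
proof -
  let ?v = "site_add u j"
  have j: "site_diff ?v u = j" unfolding site_diff_def site_add_def by simp
  show ?thesis
  proof (cases "u \<noteq> ?v \<and> (u \<in> L \<or> ?v \<in> L)")
    case True
    then have "(u, ?v) \<in> pairs r L" unfolding pairs_def using j assms(4) by simp
    then have "(\<lambda>(u, v). if site_diff v u \<in> J then (h u - h v)\<^sup>2 else 0) (u, ?v)
        \<le> (\<Sum>(u, v)\<in>pairs r L. if site_diff v u \<in> J then (h u - h v)\<^sup>2 else 0)"
      by (intro member_le_sum) (auto simp: finite_pairs assms(1) split: if_splits)
    then show ?thesis unfolding dirichlet_form_def using j assms(3) by simp
  next
    case False
    then have "h u = h ?v" using assms(2) by metis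
    then show ?thesis using dirichlet_form_nonneg by simp
  qed
qed

lemma sq_diff_le_dirichlet_form_rtrancl:
  assumes "finite L" "\<And>j. j \<in> J \<Longrightarrow> norminf j \<le> int r"
    and "(x, y) \<in> {(u, site_add u j) | u j. j \<in> J}\<^sup>*"
  shows "\<exists>K. \<forall>h. (\<forall>w. w \<notin> L \<longrightarrow> h w = 0) \<longrightarrow> (h x - h y)\<^sup>2 \<le> K * dirichlet_form r J L h"
  using assms(3)
proof (induction rule: rtrancl_induct)
  case base
  show ?case by (rule exI[of _ 0]) simp
next
  case (step z w)
  from step.IH obtain K where K: "\<forall>h. (\<forall>w. w \<notin> L \<longrightarrow> h w = 0) \<longrightarrow> (h x - h z)\<^sup>2 \<le> K * dirichlet_form r J L h"
    by blast
  from step.hyps(2) obtain j where j: "j \<in> J" "w = site_add z j" by blast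
  show ?case
  proof (intro exI[of _ "2 * K + 2"] allI impI)
    fix h :: config assume h: "\<forall>w. w \<notin> L \<longrightarrow> h w = 0"
    have "(h z - h w)\<^sup>2 \<le> dirichlet_form r J L h"
      unfolding j(2) using h j(1) assms(1,2) by (intro sq_diff_le_dirichlet_form) auto
    moreover have "(h x - h z)\<^sup>2 \<le> K * dirichlet_form r J L h" using K h by blast
    moreover have "(h x - h w)\<^sup>2 \<le> 2 * (h x - h z)\<^sup>2 + 2 * (h z - h w)\<^sup>2"
      using sum_squares_ge_zero[of "h x - 2 * h z + h w" 0] by (simp add: power2_eq_square algebra_simps)
    ultimately show "(h x - h w)\<^sup>2 \<le> (2 * K + 2) * dirichlet_form r J L h"
      by (simp add: algebra_simps)
  qed
qed

lemma sum_sq_le_dirichlet_form: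
  assumes "finite L" "irreducible_walk J" "\<And>j. j \<in> J \<Longrightarrow> norminf j \<le> int r"
  obtains K where "K \<ge> 0"
    "\<And>h. (\<And>w. w \<notin> L \<Longrightarrow> h w = 0) \<Longrightarrow> (\<Sum>u\<in>L. (h u)\<^sup>2) \<le> K * dirichlet_form r J L h"
proof -
  \<comment> \<open>Each site is joined by a path of jumps to a site \<open>y\<close> outside \<open>L\<close>, where \<open>h\<close> vanishes.\<close>
  have "infinite (UNIV :: site set)" by (simp add: finite_prod infinite_UNIV_int)
  then obtain y where y: "y \<notin> L" using ex_new_if_finite[OF _ assms(1)] by blast
  have "\<forall>u. \<exists>K. \<forall>h. (\<forall>w. w \<notin> L \<longrightarrow> h w = 0) \<longrightarrow> (h u - h y)\<^sup>2 \<le> K * dirichlet_form r J L h"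
  proof
    fix u
    have "(u, y) \<in> {(u, site_add u j) | u j. j \<in> J}\<^sup>*"
      using assms(2) unfolding irreducible_walk_def by blast
    then show "\<exists>K. \<forall>h. (\<forall>w. w \<notin> L \<longrightarrow> h w = 0) \<longrightarrow> (h u - h y)\<^sup>2 \<le> K * dirichlet_form r J L h"
      using sq_diff_le_dirichlet_form_rtrancl[OF assms(1,3)] by blast
  qed
  then obtain Ku where Ku: "\<And>u h. (\<forall>w. w \<notin> L \<longrightarrow> h w = 0) \<Longrightarrow> (h u - h y)\<^sup>2 \<le> Ku u * dirichlet_form r J L h"
    by metis
  show ?thesis
  proof (rule that[of "\<Sum>u\<in>L. \<bar>Ku u\<bar>"])
    fix h :: config assume h: "\<And>w. w \<notin> L \<Longrightarrow> h w = 0"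
    have "(\<Sum>u\<in>L. (h u)\<^sup>2) \<le> (\<Sum>u\<in>L. \<bar>Ku u\<bar> * dirichlet_form r J L h)"
    proof (rule sum_mono)
      fix u
      have "(h u)\<^sup>2 \<le> Ku u * dirichlet_form r J L h" using Ku[of h u] h y by simp
      also have "\<dots> \<le> \<bar>Ku u\<bar> * dirichlet_form r J L h"
        using dirichlet_form_nonneg by (intro mult_right_mono) auto
      finally show "(h u)\<^sup>2 \<le> \<bar>Ku u\<bar> * dirichlet_form r J L h" .
    qed
    then show "(\<Sum>u\<in>L. (h u)\<^sup>2) \<le> (\<Sum>u\<in>L. \<bar>Ku u\<bar>) * dirichlet_form r J L h"
      by (simp add: sum_distrib_right)
  qed (simp add: sum_nonneg)
qed

lemma hamiltonian_ge_dirichlet_form: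
  assumes "admissible_potential r \<Psi>"
  shows "hamiltonian r \<Psi> L (\<lambda>_. 0) + c / 4 * dirichlet_form r (jumps \<Psi> c) L h \<le> hamiltonian r \<Psi> L h"
proof -
  have "(\<Sum>(u, v)\<in>pairs r L. \<Psi> (site_diff v u) 0 + c / 2 * (if site_diff v u \<in> jumps \<Psi> c then (h u - h v)\<^sup>2 else 0))
      \<le> (\<Sum>(u, v)\<in>pairs r L. \<Psi> (site_diff v u) (h u - h v))"
  proof (intro sum_mono, clarify)
    fix u v
    show "\<Psi> (site_diff v u) 0 + c / 2 * (if site_diff v u \<in> jumps \<Psi> c then (h u - h v)\<^sup>2 else 0)
        \<le> \<Psi> (site_diff v u) (h u - h v)"
      using admissible_potential_ge_quadratic[OF assms, of "site_diff v u" c "h u - h v"]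
        admissible_potential_ge_quadratic[OF assms admissible_potential_in_jumps_0[OF assms, of "site_diff v u"], of "h u - h v"]
      by auto
  qed
  then show ?thesis
    unfolding hamiltonian_def dirichlet_form_def case_prod_beta' sum.distrib sum_distrib_left[symmetric]
    by simp
qed

lemma hamiltonian_coercive:
  assumes "admissible_potential r \<Psi>" "finite L"
  obtains \<epsilon> where "\<epsilon> > 0"
    "\<And>x. hamiltonian r \<Psi> L (\<lambda>_. 0) + \<epsilon> * (\<Sum>u\<in>L. (x u)\<^sup>2) \<le> hamiltonian r \<Psi> L (ext_bc 0 L x)"
proof -
  obtain c where c: "c > 0" "irreducible_walk (jumps \<Psi> c)"
    using assms(1) unfolding admissible_potential_def by blast
  obtain K where K: "K \<ge> 0"
    "\<And>h. (\<And>w. w \<notin> L \<Longrightarrow> h w = 0) \<Longrightarrow> (\<Sum>u\<in>L. (h u)\<^sup>2) \<le> K * dirichlet_form r (jumps \<Psi> c) L h"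
    using sum_sq_le_dirichlet_form[OF assms(2) c(2) jumps_norminf_le[OF assms(1) c(1)]] by blast
  show ?thesis
  proof (rule that[of "c / (4 * (K + 1))"])
    show "c / (4 * (K + 1)) > 0" using c K by simp
    fix x
    let ?h = "ext_bc 0 L x"
    have "(\<Sum>u\<in>L. (x u)\<^sup>2) = (\<Sum>u\<in>L. (?h u)\<^sup>2)" by (simp add: ext_bc_def)
    also have "\<dots> \<le> (K + 1) * dirichlet_form r (jumps \<Psi> c) L ?h"
      using K(2)[of ?h] dirichlet_form_nonneg[of r "jumps \<Psi> c" L ?h]
      by (simp add: ext_bc_def algebra_simps)
    finally have "c / (4 * (K + 1)) * (\<Sum>u\<in>L. (x u)\<^sup>2)
        \<le> c / (4 * (K + 1)) * ((K + 1) * dirichlet_form r (jumps \<Psi> c) L ?h)"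
      using c K by (intro mult_left_mono) auto
    also have "\<dots> = c / 4 * dirichlet_form r (jumps \<Psi> c) L ?h"
      using K(1) by (simp add: field_simps)
    finally have "c / (4 * (K + 1)) * (\<Sum>u\<in>L. (x u)\<^sup>2) \<le> c / 4 * dirichlet_form r (jumps \<Psi> c) L ?h" .
    then show "hamiltonian r \<Psi> L (\<lambda>_. 0) + c / (4 * (K + 1)) * (\<Sum>u\<in>L. (x u)\<^sup>2) \<le> hamiltonian r \<Psi> L ?h"
      using hamiltonian_ge_dirichlet_form[OF assms(1), of L c ?h] by linarith
  qed
qed

lemma nn_integral_gaussian_finite:
  fixes \<epsilon> :: real
  assumes "\<epsilon> > 0"
  shows "(\<integral>\<^sup>+t. ennreal (exp (- \<epsilon> * t\<^sup>2)) \<partial>lborel) < \<infinity>"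
proof -
  define \<sigma> where "\<sigma> = sqrt (1 / (2 * \<epsilon>))"
  have "\<sigma> > 0" "\<sigma>\<^sup>2 = 1 / (2 * \<epsilon>)" using assms unfolding \<sigma>_def by simp_all
  then have "exp (- \<epsilon> * t\<^sup>2) = sqrt (2 * pi * \<sigma>\<^sup>2) * normal_density 0 \<sigma> t" for t
    using assms unfolding normal_density_def by (simp add: field_simps)
  then have "(\<integral>\<^sup>+t. ennreal (exp (- \<epsilon> * t\<^sup>2)) \<partial>lborel)
      = ennreal (sqrt (2 * pi * \<sigma>\<^sup>2)) * (\<integral>\<^sup>+t. ennreal (normal_density 0 \<sigma> t) \<partial>lborel)"
    by (simp add: ennreal_mult nn_integral_cmult)
  also have "(\<integral>\<^sup>+t. ennreal (normal_density 0 \<sigma> t) \<partial>lborel) = 1"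
    using \<open>\<sigma> > 0\<close> by (subst nn_integral_eq_integral) auto
  finally show ?thesis by simp
qed

section \<open>Finite-volume Gibbs measures\<close>

text \<open>No side conditions are needed: the junk values \<open>a / 0 = \<infinity>\<close> (for \<open>a > 0\<close>) and
  \<open>enn2real \<infinity> = 0\<close> in \<open>ennreal\<close> match \<open>x / 0 = 0\<close> in \<open>real\<close>.\<close>

lemma enn2real_divide: "enn2real (a / b) = enn2real a / enn2real b"
proof (cases "b = 0 \<or> b = \<infinity>")
  case True
  then show ?thesis
    by (cases "a = 0") (auto simp: ennreal_divide_top divide_ennreal_def ennreal_top_mult)
next
  case False
  then obtain b' where b: "b = ennreal b'" "0 < b'" by (cases b) auto
  show ?thesis
  proof (cases a)
    case (real a')
    then show ?thesis using b by (simp add: divide_ennreal)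
  next
    case top
    then show ?thesis using b by (simp add: ennreal_top_divide)
  qed
qed

lemma enn2real_ratio_mult_le:
  fixes x y u z w :: ennreal
  assumes "x * y \<le> u * z" "0 < z" "z < \<infinity>" "u < \<infinity>"
  shows "enn2real x / enn2real z * (enn2real y / enn2real w) \<le> enn2real u / enn2real w"
proof -
  have "enn2real x * enn2real y \<le> enn2real u * enn2real z"
    using enn2real_mono[OF assms(1)] assms(3,4) by (simp add: enn2real_mult ennreal_mult_less_top)
  moreover have "0 < enn2real z" using assms(2,3) by (simp add: enn2real_positive_iff)
  ultimately have "enn2real x * enn2real y / enn2real z \<le> enn2real u"
    by (simp add: pos_divide_le_eq)
  then have "enn2real x * enn2real y / enn2real z / enn2real w \<le> enn2real u / enn2real w"
    by (rule divide_right_mono) simp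
  then show ?thesis by simp
qed

lemma enn2real_ratio_le_mult:
  fixes x y u z w :: ennreal
  assumes "u * z \<le> x * y" "0 < z" "z < \<infinity>" "x < \<infinity>" "y < \<infinity>"
  shows "enn2real u / enn2real w \<le> enn2real x / enn2real z * (enn2real y / enn2real w)"
proof -
  have "enn2real u * enn2real z \<le> enn2real x * enn2real y"
    using enn2real_mono[OF assms(1)] assms(4,5) by (simp add: enn2real_mult ennreal_mult_less_top)
  moreover have "0 < enn2real z" using assms(2,3) by (simp add: enn2real_positive_iff)
  ultimately have "enn2real u \<le> enn2real x * enn2real y / enn2real z"
    by (simp add: pos_le_divide_eq)
  then have "enn2real u / enn2real w \<le> enn2real x * enn2real y / enn2real z / enn2real w"
    by (rule divide_right_mono) simp
  then show ?thesis by simp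
qed

definition boltzmann_weight :: "nat \<Rightarrow> (site \<Rightarrow> real \<Rightarrow> real) \<Rightarrow> site set \<Rightarrow> real \<Rightarrow> config \<Rightarrow> ennreal" where
  "boltzmann_weight r \<Psi> \<Lambda> b x = ennreal (exp (- hamiltonian r \<Psi> \<Lambda> (ext_bc b \<Lambda> x)))"

lemma part_fun_eq_nn_integral:
  "part_fun r \<Psi> \<Lambda> b = (\<integral>\<^sup>+x. boltzmann_weight r \<Psi> \<Lambda> b x \<partial>PiM \<Lambda> (\<lambda>_. lborel))"
  unfolding part_fun_def boltzmann_weight_def ..

lemma measurable_ext_bc [measurable]:
  assumes "S \<subseteq> I"
  shows "ext_bc b S \<in> measurable (PiM I (\<lambda>_. lborel)) (PiM UNIV (\<lambda>_. borel :: real measure))"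
proof (rule measurable_PiM_single')
  fix u
  show "(\<lambda>x. ext_bc b S x u) \<in> borel_measurable (PiM I (\<lambda>_. lborel))"
    using assms by (cases "u \<in> S") (auto simp: ext_bc_def)
qed (simp add: space_PiM)

lemma borel_measurable_hamiltonian [measurable]:
  assumes "admissible_potential r \<Psi>"
  shows "hamiltonian r \<Psi> \<Lambda> \<in> borel_measurable (PiM UNIV (\<lambda>_. borel))"
proof -
  have [measurable]: "\<Psi> k \<in> borel_measurable borel" for k
    using admissible_potential_continuous[OF assms] by (rule borel_measurable_continuous_onI)
  show ?thesis
    unfolding hamiltonian_def[abs_def] case_prod_beta' by measurable
qed

lemma borel_measurable_boltzmann_weight [measurable]:
  assumes "admissible_potential r \<Psi>" "S \<subseteq> I"
  shows "boltzmann_weight r \<Psi> S b \<in> borel_measurable (PiM I (\<lambda>_. lborel))"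
  using assms unfolding boltzmann_weight_def[abs_def] by measurable

lemma boltzmann_weight_pos: "0 < boltzmann_weight r \<Psi> \<Lambda> b x"
  unfolding boltzmann_weight_def by simp

lemma boltzmann_weight_restrict: "boltzmann_weight r \<Psi> S b (restrict x S) = boltzmann_weight r \<Psi> S b x"
proof -
  have "ext_bc b S (restrict x S) = ext_bc b S x" by (auto simp: ext_bc_def)
  then show ?thesis by (simp add: boltzmann_weight_def)
qed

lemma emeasure_gibbs:
  assumes "admissible_potential r \<Psi>" "U \<in> sets (PiM UNIV (\<lambda>_. borel))"
  shows "emeasure (gibbs r \<Psi> \<Lambda> b) U = (\<integral>\<^sup>+x. boltzmann_weight r \<Psi> \<Lambda> b x * indicator U (ext_bc b \<Lambda> x)
      \<partial>PiM \<Lambda> (\<lambda>_. lborel)) / part_fun r \<Psi> \<Lambda> b"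
proof -
  let ?M = "PiM \<Lambda> (\<lambda>_. lborel :: real measure)"
  let ?w = "boltzmann_weight r \<Psi> \<Lambda> b" and ?Z = "part_fun r \<Psi> \<Lambda> b"
  have [measurable]: "?w \<in> borel_measurable ?M" "U \<in> sets (PiM UNIV (\<lambda>_. borel))"
    using assms by measurable
  have "emeasure (gibbs r \<Psi> \<Lambda> b) U = emeasure (density ?M (\<lambda>x. ?w x / ?Z)) (ext_bc b \<Lambda> -` U \<inter> space ?M)"
    unfolding gibbs_def boltzmann_weight_def[symmetric] by (subst emeasure_distr) simp_all
  also have "\<dots> = (\<integral>\<^sup>+x. ?w x / ?Z * indicator (ext_bc b \<Lambda> -` U \<inter> space ?M) x \<partial>?M)"
    by (subst emeasure_density) simp_all
  also have "\<dots> = (\<integral>\<^sup>+x. ?w x * indicator U (ext_bc b \<Lambda> x) / ?Z \<partial>?M)"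
    by (rule nn_integral_cong) (auto simp: indicator_def)
  also have "\<dots> = (\<integral>\<^sup>+x. ?w x * indicator U (ext_bc b \<Lambda> x) \<partial>?M) / ?Z"
    by (rule nn_integral_divide) simp
  finally show ?thesis .
qed

lemma measure_gibbs:
  assumes "admissible_potential r \<Psi>" "U \<in> sets (PiM UNIV (\<lambda>_. borel))"
  shows "measure (gibbs r \<Psi> \<Lambda> b) U = enn2real (\<integral>\<^sup>+x. boltzmann_weight r \<Psi> \<Lambda> b x * indicator U (ext_bc b \<Lambda> x)
      \<partial>PiM \<Lambda> (\<lambda>_. lborel)) / enn2real (part_fun r \<Psi> \<Lambda> b)"
  unfolding measure_def emeasure_gibbs[OF assms] enn2real_divide ..

lemma indicator_coordinate_ext_bc:
  "i \<in> \<Lambda> \<Longrightarrow> indicator {h. t < h i} (ext_bc b \<Lambda> x) = indicator {t<..} (x i)"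
  by (simp add: indicator_def ext_bc_def)

lemma indicator_box_ext_bc:
  assumes "finite A" "A \<subseteq> \<Lambda>"
  shows "indicator {h. \<forall>j\<in>A. \<bar>h j\<bar> \<le> a} (ext_bc b \<Lambda> x) = box_indicator A (- a) a x"
proof -
  have "(\<forall>j\<in>A. \<bar>ext_bc b \<Lambda> x j\<bar> \<le> a) \<longleftrightarrow> (\<forall>j\<in>A. - a \<le> x j \<and> x j \<le> a)"
    using assms(2) by (auto simp: ext_bc_def abs_le_iff subset_iff)
  then show ?thesis by (simp add: indicator_def box_indicator_eq[OF assms(1)])
qed

lemma sets_coordinate_gt [measurable]: "{h. t < h i} \<in> sets (PiM UNIV (\<lambda>_. borel :: real measure))"
proof -
  have "Measurable.pred (PiM UNIV (\<lambda>_. borel :: real measure)) (\<lambda>h. t < h i)" by measurable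
  then show ?thesis by (simp add: pred_def space_PiM)
qed

lemma sets_box [measurable]:
  assumes "finite A"
  shows "{h. \<forall>j\<in>A. \<bar>h j\<bar> \<le> a} \<in> sets (PiM UNIV (\<lambda>_. borel :: real measure))"
proof -
  have "Measurable.pred (PiM UNIV (\<lambda>_. borel :: real measure)) (\<lambda>h. \<forall>j\<in>A. \<bar>h j\<bar> \<le> a)"
    using assms by measurable
  then show ?thesis by (simp add: pred_def space_PiM)
qed

lemma measure_gibbs_coordinate:
  assumes "admissible_potential r \<Psi>" "i \<in> S"
  shows "measure (gibbs r \<Psi> S 0) {h. t < h i}
       = enn2real (\<integral>\<^sup>+x. boltzmann_weight r \<Psi> S 0 x * indicator {t<..} (x i) \<partial>PiM S (\<lambda>_. lborel))
         / enn2real (part_fun r \<Psi> S 0)"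
  unfolding measure_gibbs[OF assms(1) sets_coordinate_gt] indicator_coordinate_ext_bc[OF assms(2)] ..

lemma measure_gibbs_box:
  assumes "admissible_potential r \<Psi>" "finite A" "A \<subseteq> \<Lambda>"
  shows "measure (gibbs r \<Psi> \<Lambda> 0) {h. \<forall>j\<in>A. \<bar>h j\<bar> \<le> a}
       = enn2real (\<integral>\<^sup>+x. boltzmann_weight r \<Psi> \<Lambda> 0 x * box_indicator A (- a) a x \<partial>PiM \<Lambda> (\<lambda>_. lborel))
         / enn2real (part_fun r \<Psi> \<Lambda> 0)"
  unfolding measure_gibbs[OF assms(1) sets_box[OF assms(2)]] indicator_box_ext_bc[OF assms(2,3)] ..

lemma measure_gibbs_coordinate_box:
  assumes "admissible_potential r \<Psi>" "finite A" "A \<subseteq> \<Lambda>" "i \<in> \<Lambda>"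
  shows "measure (gibbs r \<Psi> \<Lambda> 0) ({h. t < h i} \<inter> {h. \<forall>j\<in>A. \<bar>h j\<bar> \<le> a})
       = enn2real (\<integral>\<^sup>+x. boltzmann_weight r \<Psi> \<Lambda> 0 x * box_indicator A (- a) a x * indicator {t<..} (x i)
           \<partial>PiM \<Lambda> (\<lambda>_. lborel)) / enn2real (part_fun r \<Psi> \<Lambda> 0)"
proof -
  have U: "{h. t < h i} \<inter> {h. \<forall>j\<in>A. \<bar>h j\<bar> \<le> a} \<in> sets (PiM UNIV (\<lambda>_. borel))"
    using assms(2) by measurable
  show ?thesis
    unfolding measure_gibbs[OF assms(1) U] indicator_inter_arith
      indicator_box_ext_bc[OF assms(2,3)] indicator_coordinate_ext_bc[OF assms(4)]
    by (simp add: ac_simps)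
qed

lemma hamiltonian_add_const: "hamiltonian r \<Psi> \<Lambda> (\<lambda>u. h u + b) = hamiltonian r \<Psi> \<Lambda> h"
  unfolding hamiltonian_def by simp

lemma nn_integral_boltzmann_weight_shift:
  assumes "admissible_potential r \<Psi>" "finite S" "\<phi> \<in> borel_measurable (PiM S (\<lambda>_. lborel))"
  shows "(\<integral>\<^sup>+x. boltzmann_weight r \<Psi> S b x * \<phi> x \<partial>PiM S (\<lambda>_. lborel))
       = (\<integral>\<^sup>+x. boltzmann_weight r \<Psi> S 0 x * \<phi> (\<lambda>u\<in>S. x u + b) \<partial>PiM S (\<lambda>_. lborel))"
proof -
  have "ext_bc b S (\<lambda>u\<in>S. x u + b) = (\<lambda>u. ext_bc 0 S x u + b)" for x
    by (auto simp: ext_bc_def)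
  then have "boltzmann_weight r \<Psi> S b (\<lambda>u\<in>S. x u + b) = boltzmann_weight r \<Psi> S 0 x" for x
    unfolding boltzmann_weight_def by (simp add: hamiltonian_add_const)
  moreover have "(\<lambda>x. boltzmann_weight r \<Psi> S b x * \<phi> x) \<in> borel_measurable (PiM S (\<lambda>_. lborel))"
    using assms by measurable
  ultimately show ?thesis
    using nn_integral_PiM_lborel_translate[OF assms(2), of "\<lambda>x. boltzmann_weight r \<Psi> S b x * \<phi> x" b]
    by simp
qed

lemma part_fun_shift:
  assumes "admissible_potential r \<Psi>" "finite S"
  shows "part_fun r \<Psi> S b = part_fun r \<Psi> S 0"
  using nn_integral_boltzmann_weight_shift[OF assms, of "\<lambda>_. 1" b]
  by (simp add: part_fun_eq_nn_integral)

lemma part_fun_finite: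
  assumes "admissible_potential r \<Psi>" "finite L"
  shows "part_fun r \<Psi> L b < \<infinity>"
proof -
  obtain \<epsilon> where \<epsilon>: "\<epsilon> > 0"
    "\<And>x. hamiltonian r \<Psi> L (\<lambda>_. 0) + \<epsilon> * (\<Sum>u\<in>L. (x u)\<^sup>2) \<le> hamiltonian r \<Psi> L (ext_bc 0 L x)"
    using hamiltonian_coercive[OF assms] by blast
  define C where "C = ennreal (exp (- hamiltonian r \<Psi> L (\<lambda>_. 0)))"
  have pointwise: "boltzmann_weight r \<Psi> L 0 x \<le> C * (\<Prod>u\<in>L. ennreal (exp (- \<epsilon> * (x u)\<^sup>2)))" for x
  proof -
    have "exp (- hamiltonian r \<Psi> L (ext_bc 0 L x))
        \<le> exp (- hamiltonian r \<Psi> L (\<lambda>_. 0)) * exp (\<Sum>u\<in>L. - \<epsilon> * (x u)\<^sup>2)"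
      using \<epsilon>(2)[of x] by (simp add: exp_add[symmetric] sum_distrib_left sum_negf)
    then show ?thesis
      unfolding boltzmann_weight_def C_def exp_sum[OF assms(2)]
      by (simp add: ennreal_mult[symmetric] prod_ennreal prod_nonneg ennreal_leI)
  qed
  have gaussian: "(\<integral>\<^sup>+x. (\<Prod>u\<in>L. ennreal (exp (- \<epsilon> * (x u)\<^sup>2))) \<partial>PiM L (\<lambda>_. lborel))
      = (\<Prod>u\<in>L. \<integral>\<^sup>+t. ennreal (exp (- \<epsilon> * t\<^sup>2)) \<partial>lborel)"
    by (rule lborel_product.product_nn_integral_prod[OF assms(2)]) simp
  have "part_fun r \<Psi> L 0 \<le> (\<integral>\<^sup>+x. C * (\<Prod>u\<in>L. ennreal (exp (- \<epsilon> * (x u)\<^sup>2))) \<partial>PiM L (\<lambda>_. lborel))"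
    unfolding part_fun_eq_nn_integral by (rule nn_integral_mono) (rule pointwise)
  also have "\<dots> = C * (\<Prod>u\<in>L. \<integral>\<^sup>+t. ennreal (exp (- \<epsilon> * t\<^sup>2)) \<partial>lborel)"
    unfolding gaussian[symmetric] by (rule nn_integral_cmult) measurable
  also have "\<dots> < \<infinity>"
    using nn_integral_gaussian_finite[OF \<epsilon>(1)]
    by (simp add: C_def ennreal_mult_less_top power_less_top_ennreal)
  finally show ?thesis by (simp only: part_fun_shift[OF assms, of b])
qed

lemma part_fun_pos:
  assumes "admissible_potential r \<Psi>" "finite L"
  shows "0 < part_fun r \<Psi> L b"
  using nn_integral_box_indicator_pos[OF assms(2) empty_subsetI zero_less_one
      borel_measurable_boltzmann_weight[OF assms(1) order_refl] boltzmann_weight_pos]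
  by (simp add: part_fun_eq_nn_integral box_indicator_def)

lemma nn_integral_boltzmann_weight_mult_finite:
  assumes "admissible_potential r \<Psi>" "finite \<Lambda>" "\<And>x. g x \<le> 1"
  shows "(\<integral>\<^sup>+x. boltzmann_weight r \<Psi> \<Lambda> b x * g x \<partial>PiM \<Lambda> (\<lambda>_. lborel)) < \<infinity>"
proof -
  have "(\<integral>\<^sup>+x. boltzmann_weight r \<Psi> \<Lambda> b x * g x \<partial>PiM \<Lambda> (\<lambda>_. lborel)) \<le> part_fun r \<Psi> \<Lambda> b"
    unfolding part_fun_eq_nn_integral using mult_left_mono[OF assms(3)] by (intro nn_integral_mono) simp
  then show ?thesis using part_fun_finite[OF assms(1,2)] by (simp add: le_less_trans)
qed

lemma measure_gibbs_box_pos: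
  assumes adm: "admissible_potential r \<Psi>" and fin: "finite \<Lambda>" and A: "A \<subseteq> \<Lambda>" and "0 < a"
  shows "0 < measure (gibbs r \<Psi> \<Lambda> 0) {h. \<forall>j\<in>A. \<bar>h j\<bar> \<le> a}"
proof -
  have finA: "finite A" using fin A finite_subset by blast
  let ?W = "\<integral>\<^sup>+x. boltzmann_weight r \<Psi> \<Lambda> 0 x * box_indicator A (- a) a x \<partial>PiM \<Lambda> (\<lambda>_. lborel)"
  have "0 < ?W"
    using \<open>0 < a\<close> adm A by (intro nn_integral_box_indicator_pos[OF fin A] boltzmann_weight_pos) simp_all
  moreover have "?W < \<infinity>" by (intro nn_integral_boltzmann_weight_mult_finite[OF adm fin] box_indicator_le_1)
  ultimately show ?thesis
    using part_fun_pos[OF adm fin] part_fun_finite[OF adm fin]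
    unfolding measure_gibbs_box[OF adm finA A] by (simp add: enn2real_positive_iff)
qed

lemma nn_integral_boltzmann_weight_box:
  assumes "admissible_potential r \<Psi>" "finite \<Lambda>" "A \<subseteq> \<Lambda>" "l \<le> u"
    and \<phi>: "\<phi> \<in> borel_measurable (PiM (\<Lambda> - A) (\<lambda>_. lborel))" "\<And>x. \<phi> (restrict x (\<Lambda> - A)) = \<phi> x"
  shows "(\<integral>\<^sup>+x. boltzmann_weight r \<Psi> (\<Lambda> - A) b x * box_indicator A l u x * \<phi> x \<partial>PiM \<Lambda> (\<lambda>_. lborel))
       = (\<integral>\<^sup>+x. boltzmann_weight r \<Psi> (\<Lambda> - A) 0 x * \<phi> (\<lambda>v\<in>\<Lambda> - A. x v + b) \<partial>PiM (\<Lambda> - A) (\<lambda>_. lborel))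
         * ennreal (u - l) ^ card A"
proof -
  have "finite A" using assms(2,3) finite_subset by blast
  have \<Lambda>: "(\<Lambda> - A) \<union> A = \<Lambda>" using assms(3) by blast
  have "(\<integral>\<^sup>+x. boltzmann_weight r \<Psi> (\<Lambda> - A) b x * box_indicator A l u x * \<phi> x \<partial>PiM \<Lambda> (\<lambda>_. lborel))
      = (\<integral>\<^sup>+x. boltzmann_weight r \<Psi> (\<Lambda> - A) b x * \<phi> x * box_indicator A l u x \<partial>PiM ((\<Lambda> - A) \<union> A) (\<lambda>_. lborel))"
    unfolding \<Lambda> by (simp add: ac_simps)
  also have "\<dots> = (\<integral>\<^sup>+x. boltzmann_weight r \<Psi> (\<Lambda> - A) b x * \<phi> x \<partial>PiM (\<Lambda> - A) (\<lambda>_. lborel)) * ennreal (u - l) ^ card A"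
    using assms(1,2,4) \<open>finite A\<close> \<phi>
    by (intro nn_integral_mult_box_indicator) (auto simp: boltzmann_weight_restrict)
  also have "(\<integral>\<^sup>+x. boltzmann_weight r \<Psi> (\<Lambda> - A) b x * \<phi> x \<partial>PiM (\<Lambda> - A) (\<lambda>_. lborel))
      = (\<integral>\<^sup>+x. boltzmann_weight r \<Psi> (\<Lambda> - A) 0 x * \<phi> (\<lambda>v\<in>\<Lambda> - A. x v + b) \<partial>PiM (\<Lambda> - A) (\<lambda>_. lborel))"
    using assms(1,2) \<phi>(1) by (intro nn_integral_boltzmann_weight_shift) auto
  finally show ?thesis .
qed

lemma nn_integral_boltzmann_weight_unit_box:
  assumes "admissible_potential r \<Psi>" "finite \<Lambda>" "A \<subseteq> \<Lambda>" "i \<in> \<Lambda> - A"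
  shows "(\<integral>\<^sup>+x. boltzmann_weight r \<Psi> (\<Lambda> - A) b x * box_indicator A c (c + 1) x * indicator {t<..} (x i)
           \<partial>PiM \<Lambda> (\<lambda>_. lborel))
       = (\<integral>\<^sup>+x. boltzmann_weight r \<Psi> (\<Lambda> - A) 0 x * indicator {t - b<..} (x i) \<partial>PiM (\<Lambda> - A) (\<lambda>_. lborel))"
    and "(\<integral>\<^sup>+x. boltzmann_weight r \<Psi> (\<Lambda> - A) b x * box_indicator A c (c + 1) x \<partial>PiM \<Lambda> (\<lambda>_. lborel))
       = part_fun r \<Psi> (\<Lambda> - A) 0"
  using nn_integral_boltzmann_weight_box[OF assms(1-3), of c "c + 1" "\<lambda>x. indicator {t<..} (x i)" b]
    nn_integral_boltzmann_weight_box[OF assms(1-3), of c "c + 1" "\<lambda>_. 1" b] assms(4)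
  by (simp_all add: indicator_def diff_less_eq part_fun_eq_nn_integral)

section \<open>Comparison with boundary values \<open>\<plusminus>a\<close>\<close>

text \<open>Off \<open>S\<close> the two extended configurations are ordered, so their max and min are again
  extensions by boundary values, and submodularity applies to the pairs meeting \<open>S\<close>.\<close>

lemma hamiltonian_sup_inf_le_boundary_nonpos:
  assumes "admissible_potential r \<Psi>" "finite \<Lambda>" "S \<subseteq> \<Lambda>" "b \<le> 0"
    and xy: "\<And>j. j \<in> \<Lambda> - S \<Longrightarrow> x j \<le> b \<and> b \<le> y j"
  shows "hamiltonian r \<Psi> \<Lambda> (ext_bc 0 \<Lambda> (sup x y)) + hamiltonian r \<Psi> S (ext_bc b S (inf x y))
       \<le> hamiltonian r \<Psi> S (ext_bc b S x) + hamiltonian r \<Psi> \<Lambda> (ext_bc 0 \<Lambda> y)"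
proof -
  let ?X = "ext_bc b S x" and ?Y = "ext_bc 0 \<Lambda> y"
  have "ext_bc 0 \<Lambda> (sup x y) = sup ?X ?Y" "ext_bc b S (inf x y) = inf ?X ?Y"
    using xy assms(3,4) by (auto simp: fun_eq_iff ext_bc_def sup_max inf_min max_def min_def) force+
  moreover have "?X u \<le> ?Y u \<and> ?X v \<le> ?Y v" if "(u, v) \<in> pairs r \<Lambda> - pairs r S" for u v
    using pairs_diff_outside[OF that] xy assms(4) by (auto simp: ext_bc_def)
  ultimately show ?thesis
    unfolding hamiltonian_eq_pair_energy
    using pair_energy_sup_inf_le[OF admissible_potential_convex[OF assms(1)] finite_pairs[OF assms(2)]
        pairs_mono[OF assms(3)]]
    by simp
qed

lemma hamiltonian_sup_inf_le_boundary_nonneg: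
  assumes "admissible_potential r \<Psi>" "finite \<Lambda>" "S \<subseteq> \<Lambda>" "0 \<le> b"
    and xy: "\<And>j. j \<in> \<Lambda> - S \<Longrightarrow> x j \<le> b \<and> b \<le> y j"
  shows "hamiltonian r \<Psi> S (ext_bc b S (sup x y)) + hamiltonian r \<Psi> \<Lambda> (ext_bc 0 \<Lambda> (inf x y))
       \<le> hamiltonian r \<Psi> \<Lambda> (ext_bc 0 \<Lambda> x) + hamiltonian r \<Psi> S (ext_bc b S y)"
proof -
  let ?X = "ext_bc 0 \<Lambda> x" and ?Y = "ext_bc b S y"
  have "ext_bc b S (sup x y) = sup ?X ?Y" "ext_bc 0 \<Lambda> (inf x y) = inf ?X ?Y"
    using xy assms(3,4) by (auto simp: fun_eq_iff ext_bc_def sup_max inf_min max_def min_def) force+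
  moreover have "?X u \<le> ?Y u \<and> ?X v \<le> ?Y v" if "(u, v) \<in> pairs r \<Lambda> - pairs r S" for u v
    using pairs_diff_outside[OF that] xy assms(4) by (auto simp: ext_bc_def)
  ultimately show ?thesis
    unfolding hamiltonian_eq_pair_energy
    using pair_energy_sup_inf_le'[OF admissible_potential_convex[OF assms(1)] finite_pairs[OF assms(2)]
        pairs_mono[OF assms(3)]]
    by simp
qed

lemma ennreal_exp_mult_le:
  assumes "q1 + q2 \<le> p1 + p2"
  shows "ennreal (exp (- p1)) * ennreal (exp (- p2)) \<le> ennreal (exp (- q1)) * ennreal (exp (- q2))"
  using assms by (simp add: ennreal_mult[symmetric] exp_add[symmetric] ennreal_leI)

lemma holley_condition_boundary_neg:
  assumes "admissible_potential r \<Psi>" "finite \<Lambda>" "A \<subseteq> \<Lambda>" "0 \<le> a"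
  shows "boltzmann_weight r \<Psi> (\<Lambda> - A) (- a) x * box_indicator A (- a - 1) (- a) x
           * (boltzmann_weight r \<Psi> \<Lambda> 0 y * box_indicator A (- a) a y)
       \<le> boltzmann_weight r \<Psi> \<Lambda> 0 (sup x y) * box_indicator A (- a) a (sup x y)
           * (boltzmann_weight r \<Psi> (\<Lambda> - A) (- a) (inf x y) * box_indicator A (- a - 1) (- a) (inf x y))"
proof (cases "\<forall>j\<in>A. - a - 1 \<le> x j \<and> x j \<le> - a \<and> - a \<le> y j \<and> y j \<le> a")
  case True
  have "finite A" using assms(2,3) finite_subset by blast
  with True have boxes: "box_indicator A (- a - 1) (- a) x = 1" "box_indicator A (- a) a y = 1"
    "box_indicator A (- a) a (sup x y) = 1" "box_indicator A (- a - 1) (- a) (inf x y) = 1"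
    by (auto simp: box_indicator_eq sup_max inf_min)
  have "hamiltonian r \<Psi> \<Lambda> (ext_bc 0 \<Lambda> (sup x y)) + hamiltonian r \<Psi> (\<Lambda> - A) (ext_bc (- a) (\<Lambda> - A) (inf x y))
      \<le> hamiltonian r \<Psi> (\<Lambda> - A) (ext_bc (- a) (\<Lambda> - A) x) + hamiltonian r \<Psi> \<Lambda> (ext_bc 0 \<Lambda> y)"
    by (rule hamiltonian_sup_inf_le_boundary_nonpos[OF assms(1,2) Diff_subset]) (use True assms(3,4) in auto)
  from ennreal_exp_mult_le[OF this] show ?thesis
    unfolding boxes boltzmann_weight_def by (simp add: ac_simps)
next
  case False
  have "finite A" using assms(2,3) finite_subset by blast
  with False have "box_indicator A (- a - 1) (- a) x = 0 \<or> box_indicator A (- a) a y = 0"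
    by (auto simp: box_indicator_eq)
  then show ?thesis by (elim disjE) simp_all
qed

lemma holley_condition_boundary_pos:
  assumes "admissible_potential r \<Psi>" "finite \<Lambda>" "A \<subseteq> \<Lambda>" "0 \<le> a"
  shows "boltzmann_weight r \<Psi> \<Lambda> 0 x * box_indicator A (- a) a x
           * (boltzmann_weight r \<Psi> (\<Lambda> - A) a y * box_indicator A a (a + 1) y)
       \<le> boltzmann_weight r \<Psi> (\<Lambda> - A) a (sup x y) * box_indicator A a (a + 1) (sup x y)
           * (boltzmann_weight r \<Psi> \<Lambda> 0 (inf x y) * box_indicator A (- a) a (inf x y))"
proof (cases "\<forall>j\<in>A. - a \<le> x j \<and> x j \<le> a \<and> a \<le> y j \<and> y j \<le> a + 1")
  case True
  have "finite A" using assms(2,3) finite_subset by blast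
  with True have boxes: "box_indicator A (- a) a x = 1" "box_indicator A a (a + 1) y = 1"
    "box_indicator A a (a + 1) (sup x y) = 1" "box_indicator A (- a) a (inf x y) = 1"
    by (auto simp: box_indicator_eq sup_max inf_min)
  have "hamiltonian r \<Psi> (\<Lambda> - A) (ext_bc a (\<Lambda> - A) (sup x y)) + hamiltonian r \<Psi> \<Lambda> (ext_bc 0 \<Lambda> (inf x y))
      \<le> hamiltonian r \<Psi> \<Lambda> (ext_bc 0 \<Lambda> x) + hamiltonian r \<Psi> (\<Lambda> - A) (ext_bc a (\<Lambda> - A) y)"
    by (rule hamiltonian_sup_inf_le_boundary_nonneg[OF assms(1,2) Diff_subset assms(4)]) (use True assms(3) in auto)
  from ennreal_exp_mult_le[OF this] show ?thesis
    unfolding boxes boltzmann_weight_def by (simp add: ac_simps)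
next
  case False
  have "finite A" using assms(2,3) finite_subset by blast
  with False have "box_indicator A (- a) a x = 0 \<or> box_indicator A a (a + 1) y = 0"
    by (auto simp: box_indicator_eq)
  then show ?thesis by (elim disjE) simp_all
qed

lemma nn_integral_conditioned_ge:
  assumes adm: "admissible_potential r \<Psi>" and fin: "finite \<Lambda>" and A: "A \<subseteq> \<Lambda>" and i: "i \<in> \<Lambda> - A"
    and "0 \<le> a"
  shows "(\<integral>\<^sup>+x. boltzmann_weight r \<Psi> (\<Lambda> - A) 0 x * indicator {t + a<..} (x i) \<partial>PiM (\<Lambda> - A) (\<lambda>_. lborel))
           * (\<integral>\<^sup>+x. boltzmann_weight r \<Psi> \<Lambda> 0 x * box_indicator A (- a) a x \<partial>PiM \<Lambda> (\<lambda>_. lborel))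
       \<le> (\<integral>\<^sup>+x. boltzmann_weight r \<Psi> \<Lambda> 0 x * box_indicator A (- a) a x * indicator {t<..} (x i)
             \<partial>PiM \<Lambda> (\<lambda>_. lborel))
           * part_fun r \<Psi> (\<Lambda> - A) 0"
proof -
  let ?M = "PiM \<Lambda> (\<lambda>_. lborel :: real measure)"
  have "i \<in> \<Lambda>" using i by blast
  \<comment> \<open>The box \<open>[-a-1, -a]\<close> on \<open>A\<close> stands in for the boundary value \<open>-a\<close> there.\<close>
  define \<sigma> where "\<sigma> x = boltzmann_weight r \<Psi> (\<Lambda> - A) (- a) x * box_indicator A (- a - 1) (- a) x" for x
  define \<rho> where "\<rho> x = boltzmann_weight r \<Psi> \<Lambda> 0 x * box_indicator A (- a) a x" for x
  define \<phi> where "\<phi> x = (indicator {t<..} (x i) :: ennreal)" for x :: config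
  have [measurable]: "\<rho> \<in> borel_measurable ?M" "\<sigma> \<in> borel_measurable ?M" "\<phi> \<in> borel_measurable ?M"
    unfolding \<rho>_def[abs_def] \<sigma>_def[abs_def] \<phi>_def[abs_def] using adm A \<open>i \<in> \<Lambda>\<close> by measurable
  have "(\<integral>\<^sup>+x. \<sigma> x * \<phi> x \<partial>?M) * (\<integral>\<^sup>+x. \<rho> x \<partial>?M) \<le> (\<integral>\<^sup>+x. \<rho> x * \<phi> x \<partial>?M) * (\<integral>\<^sup>+x. \<sigma> x \<partial>?M)"
  proof (rule holley_inequality[OF sigma_finite_lborel fin])
    show "\<sigma> x * \<rho> y \<le> \<rho> (sup x y) * \<sigma> (inf x y)" for x y
      unfolding \<rho>_def \<sigma>_def using holley_condition_boundary_neg[OF adm fin A \<open>0 \<le> a\<close>] .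
    show "\<phi> x \<le> \<phi> (sup x y)" for x y
      unfolding \<phi>_def by (auto simp: indicator_def sup_max max_def)
  qed simp_all
  then show ?thesis
    using nn_integral_boltzmann_weight_unit_box(1)[OF adm fin A i, of "- a" "- a - 1" t]
      nn_integral_boltzmann_weight_unit_box(2)[OF adm fin A i, of "- a" "- a - 1"]
    unfolding \<sigma>_def \<rho>_def \<phi>_def by simp
qed

lemma nn_integral_conditioned_le:
  assumes adm: "admissible_potential r \<Psi>" and fin: "finite \<Lambda>" and A: "A \<subseteq> \<Lambda>" and i: "i \<in> \<Lambda> - A"
    and "0 \<le> a"
  shows "(\<integral>\<^sup>+x. boltzmann_weight r \<Psi> \<Lambda> 0 x * box_indicator A (- a) a x * indicator {t<..} (x i)
             \<partial>PiM \<Lambda> (\<lambda>_. lborel))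
           * part_fun r \<Psi> (\<Lambda> - A) 0
       \<le> (\<integral>\<^sup>+x. boltzmann_weight r \<Psi> (\<Lambda> - A) 0 x * indicator {t - a<..} (x i) \<partial>PiM (\<Lambda> - A) (\<lambda>_. lborel))
           * (\<integral>\<^sup>+x. boltzmann_weight r \<Psi> \<Lambda> 0 x * box_indicator A (- a) a x \<partial>PiM \<Lambda> (\<lambda>_. lborel))"
proof -
  let ?M = "PiM \<Lambda> (\<lambda>_. lborel :: real measure)"
  have "i \<in> \<Lambda>" using i by blast
  define \<rho> where "\<rho> x = boltzmann_weight r \<Psi> \<Lambda> 0 x * box_indicator A (- a) a x" for x
  define \<sigma> where "\<sigma> x = boltzmann_weight r \<Psi> (\<Lambda> - A) a x * box_indicator A a (a + 1) x" for x
  define \<phi> where "\<phi> x = (indicator {t<..} (x i) :: ennreal)" for x :: config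
  have [measurable]: "\<rho> \<in> borel_measurable ?M" "\<sigma> \<in> borel_measurable ?M" "\<phi> \<in> borel_measurable ?M"
    unfolding \<rho>_def[abs_def] \<sigma>_def[abs_def] \<phi>_def[abs_def] using adm A \<open>i \<in> \<Lambda>\<close> by measurable
  have "(\<integral>\<^sup>+x. \<rho> x * \<phi> x \<partial>?M) * (\<integral>\<^sup>+x. \<sigma> x \<partial>?M) \<le> (\<integral>\<^sup>+x. \<sigma> x * \<phi> x \<partial>?M) * (\<integral>\<^sup>+x. \<rho> x \<partial>?M)"
  proof (rule holley_inequality[OF sigma_finite_lborel fin])
    show "\<rho> x * \<sigma> y \<le> \<sigma> (sup x y) * \<rho> (inf x y)" for x y
      unfolding \<rho>_def \<sigma>_def using holley_condition_boundary_pos[OF adm fin A \<open>0 \<le> a\<close>] .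
    show "\<phi> x \<le> \<phi> (sup x y)" for x y
      unfolding \<phi>_def by (auto simp: indicator_def sup_max max_def)
  qed simp_all
  then show ?thesis
    using nn_integral_boltzmann_weight_unit_box(1)[OF adm fin A i, of a a t]
      nn_integral_boltzmann_weight_unit_box(2)[OF adm fin A i, of a a]
    unfolding \<sigma>_def \<rho>_def \<phi>_def by simp
qed

lemma gibbs_conditioned_ge:
  assumes adm: "admissible_potential r \<Psi>" and fin: "finite \<Lambda>" and A: "A \<subseteq> \<Lambda>" and i: "i \<in> \<Lambda> - A"
    and "0 \<le> a"
  shows "measure (gibbs r \<Psi> (\<Lambda> - A) 0) {h. t + a < h i} * measure (gibbs r \<Psi> \<Lambda> 0) {h. \<forall>j\<in>A. \<bar>h j\<bar> \<le> a}
       \<le> measure (gibbs r \<Psi> \<Lambda> 0) ({h. t < h i} \<inter> {h. \<forall>j\<in>A. \<bar>h j\<bar> \<le> a})"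
proof -
  have finA: "finite A" and finS: "finite (\<Lambda> - A)" and "i \<in> \<Lambda>" using fin A i finite_subset by auto
  have "(\<integral>\<^sup>+x. boltzmann_weight r \<Psi> \<Lambda> 0 x * box_indicator A (- a) a x * indicator {t<..} (x i)
      \<partial>PiM \<Lambda> (\<lambda>_. lborel)) < \<infinity>"
    unfolding mult.assoc
    by (intro nn_integral_boltzmann_weight_mult_finite[OF adm fin] mult_le_one box_indicator_le_1)
      (auto simp: indicator_def)
  from enn2real_ratio_mult_le[OF nn_integral_conditioned_ge[OF assms] part_fun_pos[OF adm finS]
      part_fun_finite[OF adm finS] this]
  show ?thesis
    unfolding measure_gibbs_coordinate[OF adm i] measure_gibbs_box[OF adm finA A]
      measure_gibbs_coordinate_box[OF adm finA A \<open>i \<in> \<Lambda>\<close>] .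
qed

lemma gibbs_conditioned_le:
  assumes adm: "admissible_potential r \<Psi>" and fin: "finite \<Lambda>" and A: "A \<subseteq> \<Lambda>" and i: "i \<in> \<Lambda> - A"
    and "0 \<le> a"
  shows "measure (gibbs r \<Psi> \<Lambda> 0) ({h. t < h i} \<inter> {h. \<forall>j\<in>A. \<bar>h j\<bar> \<le> a})
       \<le> measure (gibbs r \<Psi> (\<Lambda> - A) 0) {h. t - a < h i} * measure (gibbs r \<Psi> \<Lambda> 0) {h. \<forall>j\<in>A. \<bar>h j\<bar> \<le> a}"
proof -
  have finA: "finite A" and finS: "finite (\<Lambda> - A)" and "i \<in> \<Lambda>" using fin A i finite_subset by auto
  have "(\<integral>\<^sup>+x. boltzmann_weight r \<Psi> (\<Lambda> - A) 0 x * indicator {t - a<..} (x i) \<partial>PiM (\<Lambda> - A) (\<lambda>_. lborel)) < \<infinity>"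
    by (intro nn_integral_boltzmann_weight_mult_finite[OF adm finS]) (auto simp: indicator_def)
  moreover have "(\<integral>\<^sup>+x. boltzmann_weight r \<Psi> \<Lambda> 0 x * box_indicator A (- a) a x \<partial>PiM \<Lambda> (\<lambda>_. lborel)) < \<infinity>"
    by (intro nn_integral_boltzmann_weight_mult_finite[OF adm fin] box_indicator_le_1)
  ultimately show ?thesis
    using enn2real_ratio_le_mult[OF nn_integral_conditioned_le[OF assms] part_fun_pos[OF adm finS]
        part_fun_finite[OF adm finS]]
    unfolding measure_gibbs_coordinate[OF adm i] measure_gibbs_box[OF adm finA A]
      measure_gibbs_coordinate_box[OF adm finA A \<open>i \<in> \<Lambda>\<close>]
    by blast
qed

theorem lemma6p2:
  fixes r :: nat and \<Psi> :: "site \<Rightarrow> real \<Rightarrow> real"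
    and a T :: real and \<Lambda> A :: "site set" and i :: site
  assumes "r \<ge> 1" and "admissible_potential r \<Psi>"
    and "a > 0" and "T > 0"
    and "finite \<Lambda>" and "A \<subseteq> \<Lambda>" and "i \<in> \<Lambda> - A"
  shows "measure (gibbs r \<Psi> (\<Lambda> - A) 0) {h. h i > T + a}
           \<le> measure (gibbs r \<Psi> \<Lambda> 0) ({h. h i > T} \<inter> {h. \<forall>j\<in>A. \<bar>h j\<bar> \<le> a})
             / measure (gibbs r \<Psi> \<Lambda> 0) {h. \<forall>j\<in>A. \<bar>h j\<bar> \<le> a}
       \<and> measure (gibbs r \<Psi> \<Lambda> 0) ({h. h i > T} \<inter> {h. \<forall>j\<in>A. \<bar>h j\<bar> \<le> a})
             / measure (gibbs r \<Psi> \<Lambda> 0) {h. \<forall>j\<in>A. \<bar>h j\<bar> \<le> a}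
           \<le> measure (gibbs r \<Psi> (\<Lambda> - A) 0) {h. h i > T - a}"
proof -
  have "0 < measure (gibbs r \<Psi> \<Lambda> 0) {h. \<forall>j\<in>A. \<bar>h j\<bar> \<le> a}"
    using assms by (intro measure_gibbs_box_pos) auto
  moreover have "measure (gibbs r \<Psi> (\<Lambda> - A) 0) {h. T + a < h i} * measure (gibbs r \<Psi> \<Lambda> 0) {h. \<forall>j\<in>A. \<bar>h j\<bar> \<le> a}
      \<le> measure (gibbs r \<Psi> \<Lambda> 0) ({h. T < h i} \<inter> {h. \<forall>j\<in>A. \<bar>h j\<bar> \<le> a})"
    using assms by (intro gibbs_conditioned_ge) auto
  moreover have "measure (gibbs r \<Psi> \<Lambda> 0) ({h. T < h i} \<inter> {h. \<forall>j\<in>A. \<bar>h j\<bar> \<le> a})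
      \<le> measure (gibbs r \<Psi> (\<Lambda> - A) 0) {h. T - a < h i} * measure (gibbs r \<Psi> \<Lambda> 0) {h. \<forall>j\<in>A. \<bar>h j\<bar> \<le> a}"
    using assms by (intro gibbs_conditioned_le) auto
  ultimately show ?thesis by (simp add: pos_le_divide_eq pos_divide_le_eq)
qed

end
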